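(* Let $d_1\ge d_2\ge d_3\ge 2$ be integers and let $k=d_2d_3-d_1$. If $k>1$, then $\mathbb{C}^{d_1}\otimes\mathbb{C}^{d_2}\otimes\mathbb{C}^{d_3}$ contains two SLOCC maximal states $|\Phi\rangle,|\Psi\rangle$ that are incomparable under $\le_{\mathrm{SLOCC}}$, i.e. neither $|\Phi\rangle\le_{\mathrm{SLOCC}}|\Psi\rangle$ nor $|\Psi\rangle\le_{\mathrm{SLOCC}}|\Phi\rangle$.
   Context: $|\psi\rangle\le_{\mathrm{SLOCC}}|\phi\rangle$ means $(L_1\otimes L_2\otimes L_3)|\phi\rangle=|\psi\rangle$ for some linear operators $L_i$ on $\mathbb{C}^{d_i}$. A state $|\phi\rangle$ is SLOCC maximal if for every $|\psi\rangle$ in the space, $|\phi\rangle\le_{\mathrm{SLOCC}}|\psi\rangle$ implies $|\psi\rangle\le_{\mathrm{SLOCC}}|\phi\rangle$. *)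

theory Defs
  imports "HOL-Analysis.Analysis"
begin

text \<open>Tensors in C^d1 (x) C^d2 (x) C^d3 are represented by their coefficient arrays
  (indices 0..<d_i), zero outside the index box. Linear operators on C^d are d x d
  complex matrices represented as functions nat => nat => complex (only entries with
  indices < d matter).\<close>

type_synonym tensor3 = "nat \<Rightarrow> nat \<Rightarrow> nat \<Rightarrow> complex"
type_synonym cmat = "nat \<Rightarrow> nat \<Rightarrow> complex"

definition tensor_space :: "nat \<Rightarrow> nat \<Rightarrow> nat \<Rightarrow> tensor3 set" where
  "tensor_space d1 d2 d3 =
     {\<phi>. \<forall>i j k. (d1 \<le> i \<or> d2 \<le> j \<or> d3 \<le> k) \<longrightarrow> \<phi> i j k = 0}"

definition tensor_apply :: "nat \<Rightarrow> nat \<Rightarrow> nat \<Rightarrow> cmat \<Rightarrow> cmat \<Rightarrow> cmat \<Rightarrow> tensor3 \<Rightarrow> tensor3" where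
  "tensor_apply d1 d2 d3 L1 L2 L3 \<phi> = (\<lambda>i j k.
     if i < d1 \<and> j < d2 \<and> k < d3 then
       (\<Sum>a<d1. \<Sum>b<d2. \<Sum>c<d3. L1 i a * L2 j b * L3 k c * \<phi> a b c)
     else 0)"

definition slocc_le :: "nat \<Rightarrow> nat \<Rightarrow> nat \<Rightarrow> tensor3 \<Rightarrow> tensor3 \<Rightarrow> bool" where
  "slocc_le d1 d2 d3 \<psi> \<phi> \<longleftrightarrow> (\<exists>L1 L2 L3. tensor_apply d1 d2 d3 L1 L2 L3 \<phi> = \<psi>)"

definition slocc_maximal :: "nat \<Rightarrow> nat \<Rightarrow> nat \<Rightarrow> tensor3 \<Rightarrow> bool" where
  "slocc_maximal d1 d2 d3 \<phi> \<longleftrightarrow> \<phi> \<in> tensor_space d1 d2 d3 \<and>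
     (\<forall>\<psi> \<in> tensor_space d1 d2 d3. slocc_le d1 d2 d3 \<phi> \<psi> \<longrightarrow> slocc_le d1 d2 d3 \<psi> \<phi>)"

end

theory Submission
  imports Defs "Jordan_Normal_Form.Determinant"
begin

(* Call a tensor concise if in each of its three flattenings the slices are linearly
   independent.  If a concise tensor equals (L1 (x) L2 (x) L3) psi, then every L_i is
   invertible, because the slices of the image factor through L_i.  Consequently concise
   tensors are SLOCC maximal, and two concise tensors are incomparable as soon as some
   property preserved by invertible local operators holds for one and fails for the other. *)

lemma sum_eq_single:
  assumes "finite A" "i0 \<in> A" "\<And>i. i \<in> A \<Longrightarrow> i \<noteq> i0 \<Longrightarrow> f i = 0"
  shows "sum f A = f i0"
proof -
  have "sum f A = sum (\<lambda>i. if i = i0 then f i0 else 0) A" using assms(3) by (intro sum.cong) auto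
  also have "\<dots> = f i0" using assms(1,2) by (simp add: sum.delta)
  finally show ?thesis .
qed

lemma sum_swap_mult:
  fixes c :: "'i \<Rightarrow> complex"
  shows "(\<Sum>i\<in>A. c i * (\<Sum>a\<in>B. f i a * g a)) = (\<Sum>a\<in>B. (\<Sum>i\<in>A. c i * f i a) * g a)"
  by (simp add: sum_distrib_left sum_distrib_right mult.assoc) (rule sum.swap)

definition lin_indep :: "nat \<Rightarrow> 'b set \<Rightarrow> (nat \<Rightarrow> 'b \<Rightarrow> complex) \<Rightarrow> bool" where
  "lin_indep n B f \<longleftrightarrow> (\<forall>c. (\<forall>b\<in>B. (\<Sum>i<n. c i * f i b) = 0) \<longrightarrow> (\<forall>i<n. c i = 0))"

lemma lin_indep_triangular:
  assumes "\<And>i0. i0 < n \<Longrightarrow> \<exists>b\<in>B. f i0 b \<noteq> 0 \<and> (\<forall>i. i0 < i \<and> i < n \<longrightarrow> f i b = 0)"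
  shows "lin_indep n B f"
  unfolding lin_indep_def
proof (intro allI impI)
  fix c i0 assume comb: "\<forall>b\<in>B. (\<Sum>i<n. c i * f i b) = 0" and "i0 < n"
  then show "c i0 = 0"
  proof (induction i0 rule: less_induct)
    case (less i0)
    obtain b where b: "b \<in> B" "f i0 b \<noteq> 0" and later: "\<forall>i. i0 < i \<and> i < n \<longrightarrow> f i b = 0"
      using assms[OF less.prems(2)] by blast
    have "(\<Sum>i<n. c i * f i b) = c i0 * f i0 b"
    proof (rule sum_eq_single)
      fix i assume "i \<in> {..<n}" "i \<noteq> i0"
      then show "c i * f i b = 0" using less.IH[of i] later comb by (cases "i < i0") auto
    qed (use less.prems in auto)
    then show "c i0 = 0" using comb b by simp
  qed
qed

lemma lin_indep_member_nonzero:
  assumes "lin_indep n B f" "i < n"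
  shows "\<exists>b\<in>B. f i b \<noteq> 0"
proof (rule ccontr)
  assume "\<not> ?thesis"
  then have "\<forall>b\<in>B. (\<Sum>i'<n. (if i' = i then 1 else 0) * f i' b) = 0"
    by (auto intro: sum.neutral)
  then show False using assms unfolding lin_indep_def by fastforce
qed

lemma lin_indep_factor:
  assumes indep: "lin_indep n B f"
    and factor: "\<And>i b. i < n \<Longrightarrow> b \<in> B \<Longrightarrow> f i b = (\<Sum>a<m. L i a * g a b)"
  shows "lin_indep n {..<m} L"
  unfolding lin_indep_def
proof (intro allI impI)
  fix c i0 assume rows: "\<forall>a\<in>{..<m}. (\<Sum>i<n. c i * L i a) = 0" and "i0 < n"
  have "(\<Sum>i<n. c i * f i b) = 0" if "b \<in> B" for b
  proof -
    have "(\<Sum>i<n. c i * f i b) = (\<Sum>i<n. c i * (\<Sum>a<m. L i a * g a b))"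
      using factor that by simp
    also have "\<dots> = (\<Sum>a<m. (\<Sum>i<n. c i * L i a) * g a b)" by (rule sum_swap_mult)
    also have "\<dots> = 0" using rows by (intro sum.neutral) auto
    finally show ?thesis .
  qed
  then show "c i0 = 0" using indep \<open>i0 < n\<close> unfolding lin_indep_def by blast
qed

definition inverse_pair :: "nat \<Rightarrow> cmat \<Rightarrow> cmat \<Rightarrow> bool" where
  "inverse_pair n L M \<longleftrightarrow>
     (\<forall>i<n. \<forall>j<n. (\<Sum>a<n. M i a * L a j) = (if i = j then 1 else 0)) \<and>
     (\<forall>i<n. \<forall>j<n. (\<Sum>a<n. L i a * M a j) = (if i = j then 1 else 0))"

lemma inverse_pair_sym: "inverse_pair n L M \<Longrightarrow> inverse_pair n M L"
  unfolding inverse_pair_def by blast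

lemma lin_indep_det_nonzero:
  assumes indep: "lin_indep n {..<n} L"
  shows "Determinant.det (mat n n (\<lambda>(i, j). L i j)) \<noteq> 0"
proof -
  let ?A = "mat n n (\<lambda>(i, j). L i j)"
  have AT: "transpose_mat ?A \<in> carrier_mat n n" by auto
  have "Determinant.det (transpose_mat ?A) \<noteq> 0"
  proof
    assume "Determinant.det (transpose_mat ?A) = 0"
    then obtain v where v: "v \<in> carrier_vec n" "v \<noteq> 0\<^sub>v n" "transpose_mat ?A *\<^sub>v v = 0\<^sub>v n"
      using det_0_iff_vec_prod_zero_field[OF AT] by blast
    have "(\<Sum>i<n. (v $ i) * L i a) = 0" if a: "a < n" for a
    proof -
      have "(transpose_mat ?A *\<^sub>v v) $ a = (\<Sum>i<n. (v $ i) * L i a)"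
        using a v(1) by (auto simp: mult_mat_vec_def scalar_prod_def atLeast0LessThan mult.commute
            intro!: sum.cong)
      then show ?thesis using v(3) a by simp
    qed
    then have "\<forall>i<n. v $ i = 0" using indep unfolding lin_indep_def by blast
    then have "v = 0\<^sub>v n" using v(1) by (intro eq_vecI) auto
    with v(2) show False by simp
  qed
  moreover have "?A \<in> carrier_mat n n" by simp
  ultimately show ?thesis using det_transpose by metis
qed

lemma lin_indep_imp_inverse_pair:
  assumes "lin_indep n {..<n} L"
  shows "\<exists>M. inverse_pair n L M"
proof -
  define A where "A = mat n n (\<lambda>(i, j). L i j)"
  have A: "A \<in> carrier_mat n n" unfolding A_def by auto
  from det_non_zero_imp_unit[OF A lin_indep_det_nonzero[OF assms, folded A_def], of "()"]
  obtain B where B: "B \<in> carrier_mat n n" "B * A = 1\<^sub>m n" "A * B = 1\<^sub>m n"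
    unfolding Units_def ring_mat_def by auto
  have "inverse_pair n L (\<lambda>i j. B $$ (i, j))"
    unfolding inverse_pair_def
  proof (intro conjI allI impI)
    fix i j assume i: "i < n" and j: "j < n"
    have "(B * A) $$ (i, j) = (\<Sum>a<n. B $$ (i, a) * L a j)"
      using i j A B(1) unfolding A_def
      by (auto simp: scalar_prod_def atLeast0LessThan intro!: sum.cong)
    then show "(\<Sum>a<n. B $$ (i, a) * L a j) = (if i = j then 1 else 0)" using B(2) i j by simp
    have "(A * B) $$ (i, j) = (\<Sum>a<n. L i a * B $$ (a, j))"
      using i j A B(1) unfolding A_def
      by (auto simp: scalar_prod_def atLeast0LessThan intro!: sum.cong)
    then show "(\<Sum>a<n. L i a * B $$ (a, j)) = (if i = j then 1 else 0)" using B(3) i j by simp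
  qed
  then show ?thesis by blast
qed

lemma inverse_pair_cancel:
  assumes "inverse_pair n L M" "b < n"
  shows "(\<Sum>j<n. M b j * (\<Sum>b'<n. L j b' * u b')) = u b"
proof -
  have "(\<Sum>j<n. M b j * (\<Sum>b'<n. L j b' * u b')) = (\<Sum>b'<n. (\<Sum>j<n. M b j * L j b') * u b')"
    by (rule sum_swap_mult)
  also have "\<dots> = (\<Sum>b'<n. if b' = b then u b' else 0)"
    using assms unfolding inverse_pair_def by (intro sum.cong) auto
  also have "\<dots> = u b" using assms(2) by simp
  finally show ?thesis .
qed

lemma inverse_pair_cancel_transpose:
  assumes "inverse_pair n L M" "b < n"
  shows "(\<Sum>j<n. L j b * (\<Sum>b'<n. M b' j * u b')) = u b"
proof -
  have "(\<Sum>j<n. L j b * (\<Sum>b'<n. M b' j * u b')) = (\<Sum>b'<n. (\<Sum>j<n. M b' j * L j b) * u b')"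
    by (simp add: sum_distrib_left sum_distrib_right mult.assoc mult.left_commute) (rule sum.swap)
  also have "\<dots> = (\<Sum>b'<n. if b' = b then u b' else 0)"
    using assms unfolding inverse_pair_def by (intro sum.cong) auto
  also have "\<dots> = u b" using assms(2) by simp
  finally show ?thesis .
qed

definition nonzero_vec :: "nat \<Rightarrow> (nat \<Rightarrow> complex) \<Rightarrow> bool" where
  "nonzero_vec n u \<longleftrightarrow> (\<exists>j<n. u j \<noteq> 0)"

lemma nonzero_vec_apply:
  assumes "inverse_pair n L M" "nonzero_vec n u"
  shows "nonzero_vec n (\<lambda>j. \<Sum>b<n. L j b * u b)"
proof (rule ccontr)
  assume "\<not> ?thesis"
  then have zero: "\<forall>j<n. (\<Sum>b<n. L j b * u b) = 0" unfolding nonzero_vec_def by auto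
  obtain b where b: "b < n" "u b \<noteq> 0" using assms(2) unfolding nonzero_vec_def by auto
  have "u b = (\<Sum>j<n. M b j * (\<Sum>b'<n. L j b' * u b'))"
    using inverse_pair_cancel[OF assms(1) b(1)] by simp
  also have "\<dots> = 0" using zero by simp
  finally show False using b by simp
qed

lemma nonzero_vec_apply_transpose:
  assumes "inverse_pair n L M" "nonzero_vec n u"
  shows "nonzero_vec n (\<lambda>j. \<Sum>b'<n. M b' j * u b')"
proof (rule ccontr)
  assume "\<not> ?thesis"
  then have zero: "\<forall>j<n. (\<Sum>b'<n. M b' j * u b') = 0" unfolding nonzero_vec_def by auto
  obtain b where b: "b < n" "u b \<noteq> 0" using assms(2) unfolding nonzero_vec_def by auto
  have "u b = (\<Sum>j<n. L j b * (\<Sum>b'<n. M b' j * u b'))"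
    using inverse_pair_cancel_transpose[OF assms(1) b(1)] by simp
  also have "\<dots> = 0" using zero by simp
  finally show False using b by simp
qed

definition indep_pair :: "nat \<Rightarrow> (nat \<Rightarrow> complex) \<Rightarrow> (nat \<Rightarrow> complex) \<Rightarrow> bool" where
  "indep_pair n a a' \<longleftrightarrow> (\<forall>\<alpha> \<beta>. (\<forall>i<n. \<alpha> * a i + \<beta> * a' i = 0) \<longrightarrow> \<alpha> = 0 \<and> \<beta> = 0)"

lemma indep_pair_apply:
  assumes "inverse_pair n L M" "indep_pair n a a'"
  shows "indep_pair n (\<lambda>i. \<Sum>b<n. L i b * a b) (\<lambda>i. \<Sum>b<n. L i b * a' b)"
  unfolding indep_pair_def
proof (intro allI impI)
  fix \<alpha> \<beta> assume H: "\<forall>i<n. \<alpha> * (\<Sum>b<n. L i b * a b) + \<beta> * (\<Sum>b<n. L i b * a' b) = 0"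
  have "\<alpha> * a i + \<beta> * a' i = 0" if i: "i < n" for i
  proof -
    have "\<alpha> * a i + \<beta> * a' i = (\<Sum>j<n. M i j * (\<Sum>b<n. L j b * (\<alpha> * a b + \<beta> * a' b)))"
      using inverse_pair_cancel[OF assms(1) i, of "\<lambda>b. \<alpha> * a b + \<beta> * a' b"] by simp
    also have "\<dots> = (\<Sum>j<n. M i j * (\<alpha> * (\<Sum>b<n. L j b * a b) + \<beta> * (\<Sum>b<n. L j b * a' b)))"
      by (intro sum.cong refl) (simp add: sum.distrib sum_distrib_left algebra_simps)
    also have "\<dots> = 0" using H by simp
    finally show ?thesis .
  qed
  then show "\<alpha> = 0 \<and> \<beta> = 0" using assms(2) unfolding indep_pair_def by blast
qed

definition mode1 :: "nat \<Rightarrow> cmat \<Rightarrow> tensor3 \<Rightarrow> tensor3" where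
  "mode1 n L \<phi> = (\<lambda>i j k. if i < n then (\<Sum>a<n. L i a * \<phi> a j k) else 0)"

definition mode2 :: "nat \<Rightarrow> cmat \<Rightarrow> tensor3 \<Rightarrow> tensor3" where
  "mode2 n L \<phi> = (\<lambda>i j k. if j < n then (\<Sum>b<n. L j b * \<phi> i b k) else 0)"

definition mode3 :: "nat \<Rightarrow> cmat \<Rightarrow> tensor3 \<Rightarrow> tensor3" where
  "mode3 n L \<phi> = (\<lambda>i j k. if k < n then (\<Sum>c<n. L k c * \<phi> i j c) else 0)"

lemma tensor_apply_modes:
  "tensor_apply d1 d2 d3 L1 L2 L3 \<phi> = mode1 d1 L1 (mode2 d2 L2 (mode3 d3 L3 \<phi>))"
proof (intro ext)
  fix i j k
  show "tensor_apply d1 d2 d3 L1 L2 L3 \<phi> i j k = mode1 d1 L1 (mode2 d2 L2 (mode3 d3 L3 \<phi>)) i j k"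
    unfolding tensor_apply_def mode1_def mode2_def mode3_def
    by (cases "i < d1"; cases "j < d2"; cases "k < d3") (simp_all add: sum_distrib_left mult.assoc)
qed

lemma mode1_mode2_comm: "mode1 n L (mode2 m K \<phi>) = mode2 m K (mode1 n L \<phi>)"
  unfolding mode1_def mode2_def
  by (auto simp: sum_distrib_left mult.left_commute fun_eq_iff intro: sum.swap)

lemma mode1_mode3_comm: "mode1 n L (mode3 m K \<phi>) = mode3 m K (mode1 n L \<phi>)"
  unfolding mode1_def mode3_def
  by (auto simp: sum_distrib_left mult.left_commute fun_eq_iff intro: sum.swap)

lemma mode2_mode3_comm: "mode2 n L (mode3 m K \<phi>) = mode3 m K (mode2 n L \<phi>)"
  unfolding mode2_def mode3_def
  by (auto simp: sum_distrib_left mult.left_commute fun_eq_iff intro: sum.swap)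

lemma mode1_cancel:
  assumes "inverse_pair n L M" "\<forall>i j k. n \<le> i \<longrightarrow> \<phi> i j k = 0"
  shows "mode1 n M (mode1 n L \<phi>) = \<phi>"
proof (intro ext)
  fix i j k
  show "mode1 n M (mode1 n L \<phi>) i j k = \<phi> i j k"
  proof (cases "i < n")
    case True
    have "mode1 n M (mode1 n L \<phi>) i j k = (\<Sum>a<n. M i a * (\<Sum>a'<n. L a a' * \<phi> a' j k))"
      using True unfolding mode1_def by (auto intro!: sum.cong)
    also have "\<dots> = \<phi> i j k" using inverse_pair_cancel[OF assms(1) True] .
    finally show ?thesis .
  qed (use assms(2) in \<open>auto simp: mode1_def\<close>)
qed

lemma mode2_cancel:
  assumes "inverse_pair n L M" "\<forall>i j k. n \<le> j \<longrightarrow> \<phi> i j k = 0"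
  shows "mode2 n M (mode2 n L \<phi>) = \<phi>"
proof (intro ext)
  fix i j k
  show "mode2 n M (mode2 n L \<phi>) i j k = \<phi> i j k"
  proof (cases "j < n")
    case True
    have "mode2 n M (mode2 n L \<phi>) i j k = (\<Sum>a<n. M j a * (\<Sum>a'<n. L a a' * \<phi> i a' k))"
      using True unfolding mode2_def by (auto intro!: sum.cong)
    also have "\<dots> = \<phi> i j k" using inverse_pair_cancel[OF assms(1) True] .
    finally show ?thesis .
  qed (use assms(2) in \<open>auto simp: mode2_def\<close>)
qed

lemma mode3_cancel:
  assumes "inverse_pair n L M" "\<forall>i j k. n \<le> k \<longrightarrow> \<phi> i j k = 0"
  shows "mode3 n M (mode3 n L \<phi>) = \<phi>"
proof (intro ext)
  fix i j k
  show "mode3 n M (mode3 n L \<phi>) i j k = \<phi> i j k"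
  proof (cases "k < n")
    case True
    have "mode3 n M (mode3 n L \<phi>) i j k = (\<Sum>a<n. M k a * (\<Sum>a'<n. L a a' * \<phi> i j a'))"
      using True unfolding mode3_def by (auto intro!: sum.cong)
    also have "\<dots> = \<phi> i j k" using inverse_pair_cancel[OF assms(1) True] .
    finally show ?thesis .
  qed (use assms(2) in \<open>auto simp: mode3_def\<close>)
qed

lemma tensor_apply_cancel:
  assumes "\<phi> \<in> tensor_space d1 d2 d3"
    and "inverse_pair d1 L1 M1" "inverse_pair d2 L2 M2" "inverse_pair d3 L3 M3"
  shows "tensor_apply d1 d2 d3 M1 M2 M3 (tensor_apply d1 d2 d3 L1 L2 L3 \<phi>) = \<phi>"
proof -
  have supp: "\<forall>i j k. d1 \<le> i \<longrightarrow> \<phi> i j k = 0" "\<forall>i j k. d2 \<le> j \<longrightarrow> \<phi> i j k = 0"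
    "\<forall>i j k. d3 \<le> k \<longrightarrow> \<phi> i j k = 0"
    using assms(1) unfolding tensor_space_def by auto
  have "tensor_apply d1 d2 d3 M1 M2 M3 (tensor_apply d1 d2 d3 L1 L2 L3 \<phi>)
     = mode1 d1 M1 (mode1 d1 L1 (mode2 d2 M2 (mode2 d2 L2 (mode3 d3 M3 (mode3 d3 L3 \<phi>)))))"
    unfolding tensor_apply_modes by (simp add: mode1_mode2_comm mode1_mode3_comm mode2_mode3_comm)
  also have "mode3 d3 M3 (mode3 d3 L3 \<phi>) = \<phi>" by (rule mode3_cancel[OF assms(4) supp(3)])
  also have "mode2 d2 M2 (mode2 d2 L2 \<phi>) = \<phi>" by (rule mode2_cancel[OF assms(3) supp(2)])
  also have "mode1 d1 M1 (mode1 d1 L1 \<phi>) = \<phi>" by (rule mode1_cancel[OF assms(2) supp(1)])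
  finally show ?thesis .
qed

text \<open>A tensor is concise when, in each of its three flattenings, the slices along that
  mode are linearly independent (it does not fit into a smaller local space).\<close>

definition concise :: "nat \<Rightarrow> nat \<Rightarrow> nat \<Rightarrow> tensor3 \<Rightarrow> bool" where
  "concise d1 d2 d3 \<phi> \<longleftrightarrow>
     lin_indep d1 ({..<d2} \<times> {..<d3}) (\<lambda>i (j, k). \<phi> i j k) \<and>
     lin_indep d2 ({..<d1} \<times> {..<d3}) (\<lambda>j (i, k). \<phi> i j k) \<and>
     lin_indep d3 ({..<d1} \<times> {..<d2}) (\<lambda>k (i, j). \<phi> i j k)"

lemma concise_by_echelon:
  assumes "\<And>i0. i0 < d1 \<Longrightarrow>
      \<exists>j<d2. \<exists>k<d3. \<phi> i0 j k \<noteq> 0 \<and> (\<forall>i. i0 < i \<and> i < d1 \<longrightarrow> \<phi> i j k = 0)"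
    and "\<And>j0. j0 < d2 \<Longrightarrow>
      \<exists>i<d1. \<exists>k<d3. \<phi> i j0 k \<noteq> 0 \<and> (\<forall>j. j0 < j \<and> j < d2 \<longrightarrow> \<phi> i j k = 0)"
    and "\<And>k0. k0 < d3 \<Longrightarrow>
      \<exists>i<d1. \<exists>j<d2. \<phi> i j k0 \<noteq> 0 \<and> (\<forall>k. k0 < k \<and> k < d3 \<longrightarrow> \<phi> i j k = 0)"
  shows "concise d1 d2 d3 \<phi>"
  unfolding concise_def
proof (intro conjI lin_indep_triangular)
  fix i0 assume "i0 < d1"
  then show "\<exists>b\<in>{..<d2} \<times> {..<d3}. (\<lambda>i (j, k). \<phi> i j k) i0 b \<noteq> 0 \<and>
      (\<forall>i. i0 < i \<and> i < d1 \<longrightarrow> (\<lambda>i (j, k). \<phi> i j k) i b = 0)"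
    using assms(1) by fastforce
next
  fix j0 assume "j0 < d2"
  then show "\<exists>b\<in>{..<d1} \<times> {..<d3}. (\<lambda>j (i, k). \<phi> i j k) j0 b \<noteq> 0 \<and>
      (\<forall>j. j0 < j \<and> j < d2 \<longrightarrow> (\<lambda>j (i, k). \<phi> i j k) j b = 0)"
    using assms(2) by fastforce
next
  fix k0 assume "k0 < d3"
  then show "\<exists>b\<in>{..<d1} \<times> {..<d2}. (\<lambda>k (i, j). \<phi> i j k) k0 b \<noteq> 0 \<and>
      (\<forall>k. k0 < k \<and> k < d3 \<longrightarrow> (\<lambda>k (i, j). \<phi> i j k) k b = 0)"
    using assms(3) by fastforce
qed

text \<open>If a concise tensor is the image of some tensor under \<open>L1 \<otimes> L2 \<otimes> L3\<close>, then all
  three \<open>L\<^sub>i\<close> are invertible: the slices of the image factor through \<open>L\<^sub>i\<close>.\<close>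

lemma concise_image_invertible:
  assumes "concise d1 d2 d3 (tensor_apply d1 d2 d3 L1 L2 L3 \<psi>)"
  shows "\<exists>M1 M2 M3. inverse_pair d1 L1 M1 \<and> inverse_pair d2 L2 M2 \<and> inverse_pair d3 L3 M3"
proof -
  let ?\<phi> = "tensor_apply d1 d2 d3 L1 L2 L3 \<psi>"
  have e1: "?\<phi> = mode1 d1 L1 (mode2 d2 L2 (mode3 d3 L3 \<psi>))" by (rule tensor_apply_modes)
  have e2: "?\<phi> = mode2 d2 L2 (mode1 d1 L1 (mode3 d3 L3 \<psi>))"
    using e1 mode1_mode2_comm by simp
  have e3: "?\<phi> = mode3 d3 L3 (mode1 d1 L1 (mode2 d2 L2 \<psi>))"
    using e1 mode1_mode3_comm mode2_mode3_comm by simp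
  have "lin_indep d1 {..<d1} L1"
    by (rule lin_indep_factor[where B = "{..<d2} \<times> {..<d3}" and f = "\<lambda>i (j, k). ?\<phi> i j k"
          and g = "\<lambda>a (j, k). mode2 d2 L2 (mode3 d3 L3 \<psi>) a j k"])
      (use assms in \<open>auto simp: concise_def e1 mode1_def\<close>)
  moreover have "lin_indep d2 {..<d2} L2"
    by (rule lin_indep_factor[where B = "{..<d1} \<times> {..<d3}" and f = "\<lambda>j (i, k). ?\<phi> i j k"
          and g = "\<lambda>b (i, k). mode1 d1 L1 (mode3 d3 L3 \<psi>) i b k"])
      (use assms in \<open>auto simp: concise_def e2 mode2_def\<close>)
  moreover have "lin_indep d3 {..<d3} L3"
    by (rule lin_indep_factor[where B = "{..<d1} \<times> {..<d2}" and f = "\<lambda>k (i, j). ?\<phi> i j k"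
          and g = "\<lambda>c (i, j). mode1 d1 L1 (mode2 d2 L2 \<psi>) i j c"])
      (use assms in \<open>auto simp: concise_def e3 mode3_def\<close>)
  ultimately show ?thesis using lin_indep_imp_inverse_pair by meson
qed

lemma concise_nonzero:
  assumes "concise d1 d2 d3 \<phi>" "0 < d1"
  shows "\<phi> \<noteq> (\<lambda>_ _ _. 0)"
  using lin_indep_member_nonzero[of d1 _ _ 0] assms unfolding concise_def by fastforce

text \<open>Concise tensors are SLOCC maximal: anything they can be reached from is reached by
  invertible operators, which can be undone.\<close>

lemma concise_slocc_maximal:
  assumes sp: "\<phi> \<in> tensor_space d1 d2 d3" and conc: "concise d1 d2 d3 \<phi>"
  shows "slocc_maximal d1 d2 d3 \<phi>"
  unfolding slocc_maximal_def
proof (intro conjI ballI impI sp)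
  fix \<psi> assume sp\<psi>: "\<psi> \<in> tensor_space d1 d2 d3" and "slocc_le d1 d2 d3 \<phi> \<psi>"
  then obtain L1 L2 L3 where e: "tensor_apply d1 d2 d3 L1 L2 L3 \<psi> = \<phi>"
    unfolding slocc_le_def by blast
  obtain M1 M2 M3 where M: "inverse_pair d1 L1 M1" "inverse_pair d2 L2 M2" "inverse_pair d3 L3 M3"
    using concise_image_invertible[of d1 d2 d3 L1 L2 L3 \<psi>] conc e by blast
  have "tensor_apply d1 d2 d3 M1 M2 M3 \<phi> = \<psi>"
    using tensor_apply_cancel[OF sp\<psi> M] e by simp
  then show "slocc_le d1 d2 d3 \<psi> \<phi>" unfolding slocc_le_def by blast
qed

definition slocc_invariant :: "nat \<Rightarrow> nat \<Rightarrow> nat \<Rightarrow> (tensor3 \<Rightarrow> bool) \<Rightarrow> bool" where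
  "slocc_invariant d1 d2 d3 P \<longleftrightarrow> (\<forall>\<phi> L M. P \<phi> \<longrightarrow>
     (inverse_pair d1 L M \<longrightarrow> P (mode1 d1 L \<phi>)) \<and>
     (inverse_pair d2 L M \<longrightarrow> P (mode2 d2 L \<phi>)) \<and>
     (inverse_pair d3 L M \<longrightarrow> P (mode3 d3 L \<phi>)))"

lemma slocc_invariantI:
  assumes "\<And>\<phi> L M. P \<phi> \<Longrightarrow> inverse_pair d1 L M \<Longrightarrow> P (mode1 d1 L \<phi>)"
    and "\<And>\<phi> L M. P \<phi> \<Longrightarrow> inverse_pair d2 L M \<Longrightarrow> P (mode2 d2 L \<phi>)"
    and "\<And>\<phi> L M. P \<phi> \<Longrightarrow> inverse_pair d3 L M \<Longrightarrow> P (mode3 d3 L \<phi>)"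
  shows "slocc_invariant d1 d2 d3 P"
  using assms unfolding slocc_invariant_def by blast

lemma slocc_invariant_tensor_apply:
  assumes "slocc_invariant d1 d2 d3 P" "P \<phi>"
    and "inverse_pair d1 L1 M1" "inverse_pair d2 L2 M2" "inverse_pair d3 L3 M3"
  shows "P (tensor_apply d1 d2 d3 L1 L2 L3 \<phi>)"
  using assms unfolding slocc_invariant_def tensor_apply_modes by meson

definition incomparable_maximal_pair :: "nat \<Rightarrow> nat \<Rightarrow> nat \<Rightarrow> bool" where
  "incomparable_maximal_pair d1 d2 d3 \<longleftrightarrow> (\<exists>\<Phi> \<Psi>.
     \<Phi> \<in> tensor_space d1 d2 d3 \<and> \<Psi> \<in> tensor_space d1 d2 d3 \<and>
     \<Phi> \<noteq> (\<lambda>_ _ _. 0) \<and> \<Psi> \<noteq> (\<lambda>_ _ _. 0) \<and>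
     slocc_maximal d1 d2 d3 \<Phi> \<and> slocc_maximal d1 d2 d3 \<Psi> \<and>
     \<not> slocc_le d1 d2 d3 \<Phi> \<Psi> \<and> \<not> slocc_le d1 d2 d3 \<Psi> \<Phi>)"

text \<open>The general strategy: two concise tensors separated by an SLOCC invariant are
  maximal and incomparable, since any SLOCC map onto a concise tensor is invertible.\<close>

lemma separated_concise_pair:
  assumes d1: "0 < d1"
    and sp\<Phi>: "\<Phi> \<in> tensor_space d1 d2 d3" and sp\<Psi>: "\<Psi> \<in> tensor_space d1 d2 d3"
    and conc\<Phi>: "concise d1 d2 d3 \<Phi>" and conc\<Psi>: "concise d1 d2 d3 \<Psi>"
    and inv: "slocc_invariant d1 d2 d3 P" and "P \<Psi>" and "\<not> P \<Phi>"
  shows "incomparable_maximal_pair d1 d2 d3"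
proof -
  have not_le: "\<not> slocc_le d1 d2 d3 \<Phi> \<Psi>"
  proof
    assume "slocc_le d1 d2 d3 \<Phi> \<Psi>"
    then obtain L1 L2 L3 where e: "tensor_apply d1 d2 d3 L1 L2 L3 \<Psi> = \<Phi>"
      unfolding slocc_le_def by blast
    then obtain M1 M2 M3 where "inverse_pair d1 L1 M1" "inverse_pair d2 L2 M2" "inverse_pair d3 L3 M3"
      using concise_image_invertible[of d1 d2 d3 L1 L2 L3 \<Psi>] conc\<Phi> by blast
    then have "P \<Phi>" using slocc_invariant_tensor_apply[OF inv \<open>P \<Psi>\<close>] e by metis
    with \<open>\<not> P \<Phi>\<close> show False ..
  qed
  have not_ge: "\<not> slocc_le d1 d2 d3 \<Psi> \<Phi>"
  proof
    assume "slocc_le d1 d2 d3 \<Psi> \<Phi>"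
    then obtain L1 L2 L3 where e: "tensor_apply d1 d2 d3 L1 L2 L3 \<Phi> = \<Psi>"
      unfolding slocc_le_def by blast
    then obtain M1 M2 M3 where M: "inverse_pair d1 L1 M1" "inverse_pair d2 L2 M2" "inverse_pair d3 L3 M3"
      using concise_image_invertible[of d1 d2 d3 L1 L2 L3 \<Phi>] conc\<Psi> by blast
    have "tensor_apply d1 d2 d3 M1 M2 M3 \<Psi> = \<Phi>"
      using tensor_apply_cancel[OF sp\<Phi> M] e by simp
    moreover have "P (tensor_apply d1 d2 d3 M1 M2 M3 \<Psi>)"
      using slocc_invariant_tensor_apply[OF inv \<open>P \<Psi>\<close>] M inverse_pair_sym by blast
    ultimately show False using \<open>\<not> P \<Phi>\<close> by simp
  qed
  show ?thesis
    unfolding incomparable_maximal_pair_def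
    using sp\<Phi> sp\<Psi> concise_nonzero[OF conc\<Phi> d1] concise_nonzero[OF conc\<Psi> d1]
      concise_slocc_maximal[OF sp\<Phi> conc\<Phi>] concise_slocc_maximal[OF sp\<Psi> conc\<Psi>] not_le not_ge
    by blast
qed

definition contract23 :: "nat \<Rightarrow> nat \<Rightarrow> tensor3 \<Rightarrow> (nat \<Rightarrow> complex) \<Rightarrow> (nat \<Rightarrow> complex) \<Rightarrow> nat \<Rightarrow> complex" where
  "contract23 d2 d3 \<phi> u v i = (\<Sum>j<d2. \<Sum>k<d3. \<phi> i j k * u j * v k)"

definition contract1 :: "nat \<Rightarrow> tensor3 \<Rightarrow> (nat \<Rightarrow> complex) \<Rightarrow> nat \<Rightarrow> nat \<Rightarrow> complex" where
  "contract1 d1 \<phi> c j k = (\<Sum>i<d1. c i * \<phi> i j k)"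

definition contract3 :: "nat \<Rightarrow> tensor3 \<Rightarrow> (nat \<Rightarrow> complex) \<Rightarrow> nat \<Rightarrow> nat \<Rightarrow> complex" where
  "contract3 d3 \<phi> v i j = (\<Sum>k<d3. \<phi> i j k * v k)"

lemma sum_swap_inner: "(\<Sum>x\<in>X. \<Sum>y\<in>Y. \<Sum>z\<in>Z. f x y z) = (\<Sum>x\<in>X. \<Sum>z\<in>Z. \<Sum>y\<in>Y. f x y z)"
  by (rule sum.cong[OF refl]) (rule sum.swap)

lemma contract23_mode1:
  assumes "i < d1"
  shows "contract23 d2 d3 (mode1 d1 L \<phi>) u v i = (\<Sum>a<d1. L i a * contract23 d2 d3 \<phi> u v a)"
proof -
  have "contract23 d2 d3 (mode1 d1 L \<phi>) u v i
      = (\<Sum>j<d2. \<Sum>k<d3. \<Sum>a<d1. L i a * (\<phi> a j k * u j * v k))"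
    using assms unfolding contract23_def mode1_def by (simp add: sum_distrib_left sum_distrib_right ac_simps)
  also have "\<dots> = (\<Sum>j<d2. \<Sum>a<d1. \<Sum>k<d3. L i a * (\<phi> a j k * u j * v k))" by (rule sum_swap_inner)
  also have "\<dots> = (\<Sum>a<d1. \<Sum>j<d2. \<Sum>k<d3. L i a * (\<phi> a j k * u j * v k))" by (rule sum.swap)
  also have "\<dots> = (\<Sum>a<d1. L i a * contract23 d2 d3 \<phi> u v a)"
    unfolding contract23_def by (simp add: sum_distrib_left)
  finally show ?thesis .
qed

lemma contract23_mode2:
  "contract23 d2 d3 (mode2 d2 L \<phi>) x v i = contract23 d2 d3 \<phi> (\<lambda>b. \<Sum>j<d2. L j b * x j) v i"
proof -
  have "contract23 d2 d3 (mode2 d2 L \<phi>) x v i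
      = (\<Sum>j<d2. \<Sum>k<d3. \<Sum>b<d2. (L j b * x j) * (\<phi> i b k * v k))"
    unfolding contract23_def mode2_def by (simp add: sum_distrib_left sum_distrib_right ac_simps)
  also have "\<dots> = (\<Sum>j<d2. \<Sum>b<d2. \<Sum>k<d3. (L j b * x j) * (\<phi> i b k * v k))" by (rule sum_swap_inner)
  also have "\<dots> = (\<Sum>b<d2. \<Sum>j<d2. \<Sum>k<d3. (L j b * x j) * (\<phi> i b k * v k))" by (rule sum.swap)
  also have "\<dots> = (\<Sum>b<d2. \<Sum>k<d3. \<Sum>j<d2. (L j b * x j) * (\<phi> i b k * v k))" by (rule sum_swap_inner)
  also have "\<dots> = contract23 d2 d3 \<phi> (\<lambda>b. \<Sum>j<d2. L j b * x j) v i"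
    unfolding contract23_def by (simp add: sum_distrib_left sum_distrib_right ac_simps)
  finally show ?thesis .
qed

lemma contract23_mode3:
  "contract23 d2 d3 (mode3 d3 L \<phi>) u y i = contract23 d2 d3 \<phi> u (\<lambda>c. \<Sum>k<d3. L k c * y k) i"
proof -
  have "contract23 d2 d3 (mode3 d3 L \<phi>) u y i
      = (\<Sum>j<d2. \<Sum>k<d3. \<Sum>c<d3. (L k c * y k) * (\<phi> i j c * u j))"
    unfolding contract23_def mode3_def by (simp add: sum_distrib_left sum_distrib_right ac_simps)
  also have "\<dots> = (\<Sum>j<d2. \<Sum>c<d3. \<Sum>k<d3. (L k c * y k) * (\<phi> i j c * u j))" by (rule sum_swap_inner)
  also have "\<dots> = contract23 d2 d3 \<phi> u (\<lambda>c. \<Sum>k<d3. L k c * y k) i"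
    unfolding contract23_def by (simp add: sum_distrib_left sum_distrib_right ac_simps)
  finally show ?thesis .
qed

lemma contract23_cong:
  "(\<And>j. j < d2 \<Longrightarrow> u j = u' j) \<Longrightarrow> (\<And>k. k < d3 \<Longrightarrow> v k = v' k) \<Longrightarrow>
    contract23 d2 d3 \<phi> u v i = contract23 d2 d3 \<phi> u' v' i"
  unfolding contract23_def by (intro sum.cong) auto

lemma contract1_mode1:
  "contract1 d1 (mode1 d1 L \<phi>) c j k = contract1 d1 \<phi> (\<lambda>a. \<Sum>i<d1. c i * L i a) j k"
proof -
  have "contract1 d1 (mode1 d1 L \<phi>) c j k = (\<Sum>i<d1. c i * (\<Sum>a<d1. L i a * \<phi> a j k))"
    unfolding contract1_def mode1_def by (intro sum.cong) auto
  also have "\<dots> = (\<Sum>a<d1. (\<Sum>i<d1. c i * L i a) * \<phi> a j k)" by (rule sum_swap_mult)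
  finally show ?thesis unfolding contract1_def .
qed

lemma contract1_mode2:
  "j < d2 \<Longrightarrow> contract1 d1 (mode2 d2 L \<phi>) c j k = (\<Sum>b<d2. L j b * contract1 d1 \<phi> c b k)"
  unfolding contract1_def mode2_def by (simp add: sum_distrib_left ac_simps) (rule sum.swap)

lemma contract1_mode3:
  "k < d3 \<Longrightarrow> contract1 d1 (mode3 d3 L \<phi>) c j k = (\<Sum>b<d3. L k b * contract1 d1 \<phi> c j b)"
  unfolding contract1_def mode3_def by (simp add: sum_distrib_left ac_simps) (rule sum.swap)

lemma contract1_cong:
  "(\<And>i. i < d1 \<Longrightarrow> c i = c' i) \<Longrightarrow> contract1 d1 \<phi> c j k = contract1 d1 \<phi> c' j k"
  unfolding contract1_def by (intro sum.cong) auto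

lemma contract3_mode1:
  "i < d1 \<Longrightarrow> contract3 d3 (mode1 d1 L \<phi>) v i j = (\<Sum>a<d1. L i a * contract3 d3 \<phi> v a j)"
  unfolding contract3_def mode1_def
  by (simp add: sum_distrib_left sum_distrib_right ac_simps) (rule sum.swap)

lemma contract3_mode2:
  "j < d2 \<Longrightarrow> contract3 d3 (mode2 d2 L \<phi>) v i j = (\<Sum>a<d2. L j a * contract3 d3 \<phi> v i a)"
  unfolding contract3_def mode2_def
  by (simp add: sum_distrib_left sum_distrib_right ac_simps) (rule sum.swap)

lemma contract3_mode3:
  "contract3 d3 (mode3 d3 L \<phi>) y i j = contract3 d3 \<phi> (\<lambda>c. \<Sum>k<d3. L k c * y k) i j"
  unfolding contract3_def mode3_def
  by (simp add: sum_distrib_left sum_distrib_right ac_simps) (rule sum.swap)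

lemma contract3_cong:
  "(\<And>k. k < d3 \<Longrightarrow> v k = v' k) \<Longrightarrow> contract3 d3 \<phi> v i j = contract3 d3 \<phi> v' i j"
  unfolding contract3_def by (intro sum.cong) auto

text \<open>Such \<open>u, v\<close> are transported by \<open>M\<^sup>T\<close>.\<close>

definition annihilates_product :: "nat \<Rightarrow> nat \<Rightarrow> nat \<Rightarrow> tensor3 \<Rightarrow> bool" where
  "annihilates_product d1 d2 d3 \<phi> \<longleftrightarrow>
     (\<exists>u v. nonzero_vec d2 u \<and> nonzero_vec d3 v \<and> (\<forall>i<d1. contract23 d2 d3 \<phi> u v i = 0))"

lemma annihilates_product_invariant: "slocc_invariant d1 d2 d3 (annihilates_product d1 d2 d3)"
proof (rule slocc_invariantI)
  fix \<phi> L M assume "annihilates_product d1 d2 d3 \<phi>"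
  then obtain u v where u: "nonzero_vec d2 u" and v: "nonzero_vec d3 v"
    and zero: "\<forall>i<d1. contract23 d2 d3 \<phi> u v i = 0"
    unfolding annihilates_product_def by blast
  have "\<forall>i<d1. contract23 d2 d3 (mode1 d1 L \<phi>) u v i = 0"
    using zero by (simp add: contract23_mode1)
  then show "annihilates_product d1 d2 d3 (mode1 d1 L \<phi>)"
    unfolding annihilates_product_def using u v by blast
  show "annihilates_product d1 d2 d3 (mode2 d2 L \<phi>)" if LM: "inverse_pair d2 L M"
  proof -
    let ?x = "\<lambda>j. \<Sum>b'<d2. M b' j * u b'"
    have "contract23 d2 d3 (mode2 d2 L \<phi>) ?x v i = contract23 d2 d3 \<phi> u v i" for i
      unfolding contract23_mode2
      by (rule contract23_cong) (simp_all add: inverse_pair_cancel_transpose[OF LM])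
    then have "\<forall>i<d1. contract23 d2 d3 (mode2 d2 L \<phi>) ?x v i = 0" using zero by simp
    then show ?thesis unfolding annihilates_product_def
      using nonzero_vec_apply_transpose[OF LM u] v by blast
  qed
  show "annihilates_product d1 d2 d3 (mode3 d3 L \<phi>)" if LM: "inverse_pair d3 L M"
  proof -
    let ?y = "\<lambda>k. \<Sum>b'<d3. M b' k * v b'"
    have "contract23 d2 d3 (mode3 d3 L \<phi>) u ?y i = contract23 d2 d3 \<phi> u v i" for i
      unfolding contract23_mode3
      by (rule contract23_cong) (simp_all add: inverse_pair_cancel_transpose[OF LM])
    then have "\<forall>i<d1. contract23 d2 d3 (mode3 d3 L \<phi>) u ?y i = 0" using zero by simp
    then show ?thesis unfolding annihilates_product_def
      using nonzero_vec_apply_transpose[OF LM v] u by blast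
  qed
qed

definition rank_one_in_span1 :: "nat \<Rightarrow> nat \<Rightarrow> nat \<Rightarrow> tensor3 \<Rightarrow> bool" where
  "rank_one_in_span1 d1 d2 d3 \<phi> \<longleftrightarrow> (\<exists>c u v. nonzero_vec d2 u \<and> nonzero_vec d3 v \<and>
     (\<forall>j<d2. \<forall>k<d3. contract1 d1 \<phi> c j k = u j * v k))"

lemma rank_one_in_span1_invariant: "slocc_invariant d1 d2 d3 (rank_one_in_span1 d1 d2 d3)"
proof (rule slocc_invariantI)
  fix \<phi> L M assume "rank_one_in_span1 d1 d2 d3 \<phi>"
  then obtain c u v where u: "nonzero_vec d2 u" and v: "nonzero_vec d3 v"
    and rk: "\<forall>j<d2. \<forall>k<d3. contract1 d1 \<phi> c j k = u j * v k"
    unfolding rank_one_in_span1_def by blast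
  show "rank_one_in_span1 d1 d2 d3 (mode1 d1 L \<phi>)" if LM: "inverse_pair d1 L M"
  proof -
    let ?c = "\<lambda>i. \<Sum>a<d1. M a i * c a"
    have "(\<Sum>i<d1. ?c i * L i a) = c a" if "a < d1" for a
    proof -
      have "(\<Sum>i<d1. ?c i * L i a) = (\<Sum>i<d1. L i a * ?c i)"
        by (intro sum.cong refl) (rule mult.commute)
      also have "\<dots> = c a" by (rule inverse_pair_cancel_transpose[OF LM that])
      finally show ?thesis .
    qed
    then have "contract1 d1 (mode1 d1 L \<phi>) ?c j k = contract1 d1 \<phi> c j k" for j k
      unfolding contract1_mode1 by (rule contract1_cong)
    then have "\<forall>j<d2. \<forall>k<d3. contract1 d1 (mode1 d1 L \<phi>) ?c j k = u j * v k" using rk by simp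
    then show ?thesis unfolding rank_one_in_span1_def using u v by blast
  qed
  show "rank_one_in_span1 d1 d2 d3 (mode2 d2 L \<phi>)" if LM: "inverse_pair d2 L M"
  proof -
    let ?u = "\<lambda>j. \<Sum>b<d2. L j b * u b"
    have "contract1 d1 (mode2 d2 L \<phi>) c j k = ?u j * v k" if jk: "j < d2" "k < d3" for j k
    proof -
      have "contract1 d1 (mode2 d2 L \<phi>) c j k = (\<Sum>b<d2. L j b * (u b * v k))"
        unfolding contract1_mode2[OF jk(1)] using rk jk by (intro sum.cong) auto
      also have "\<dots> = ?u j * v k"
        unfolding sum_distrib_right by (rule sum.cong) (simp_all add: ac_simps)
      finally show ?thesis .
    qed
    then show ?thesis unfolding rank_one_in_span1_def using nonzero_vec_apply[OF LM u] v by blast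
  qed
  show "rank_one_in_span1 d1 d2 d3 (mode3 d3 L \<phi>)" if LM: "inverse_pair d3 L M"
  proof -
    let ?v = "\<lambda>k. \<Sum>b<d3. L k b * v b"
    have "contract1 d1 (mode3 d3 L \<phi>) c j k = u j * ?v k" if jk: "j < d2" "k < d3" for j k
    proof -
      have "contract1 d1 (mode3 d3 L \<phi>) c j k = (\<Sum>b<d3. L k b * (u j * v b))"
        unfolding contract1_mode3[OF jk(2)] using rk jk by (intro sum.cong) auto
      also have "\<dots> = u j * ?v k" by (simp add: sum_distrib_left ac_simps)
      finally show ?thesis .
    qed
    then show ?thesis unfolding rank_one_in_span1_def using nonzero_vec_apply[OF LM v] u by blast
  qed
qed

text \<open>Along the first two modes the factors \<open>a, b\<close> are transported by \<open>L\<close>,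
  along the third mode the vector \<open>v\<close> is transported by \<open>M\<^sup>T\<close>.\<close>

definition rank_one_contraction3 ::
  "nat \<Rightarrow> nat \<Rightarrow> nat \<Rightarrow> tensor3 \<Rightarrow> (nat \<Rightarrow> complex) \<Rightarrow> (nat \<Rightarrow> complex) \<Rightarrow> (nat \<Rightarrow> complex) \<Rightarrow> bool"
  where "rank_one_contraction3 d1 d2 d3 \<phi> v a b \<longleftrightarrow> (\<forall>i<d1. \<forall>j<d2. contract3 d3 \<phi> v i j = a i * b j)"

lemma rank_one_contraction3_mode1:
  assumes "rank_one_contraction3 d1 d2 d3 \<phi> v a b"
  shows "rank_one_contraction3 d1 d2 d3 (mode1 d1 L \<phi>) v (\<lambda>i. \<Sum>a'<d1. L i a' * a a') b"
  unfolding rank_one_contraction3_def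
proof (intro allI impI)
  fix i j assume ij: "i < d1" "j < d2"
  have "contract3 d3 (mode1 d1 L \<phi>) v i j = (\<Sum>a'<d1. L i a' * (a a' * b j))"
    unfolding contract3_mode1[OF ij(1)]
    using assms ij unfolding rank_one_contraction3_def by (intro sum.cong) auto
  also have "\<dots> = (\<Sum>a'<d1. L i a' * a a') * b j"
    unfolding sum_distrib_right by (rule sum.cong) (simp_all add: ac_simps)
  finally show "contract3 d3 (mode1 d1 L \<phi>) v i j = (\<Sum>a'<d1. L i a' * a a') * b j" .
qed

lemma rank_one_contraction3_mode2:
  assumes "rank_one_contraction3 d1 d2 d3 \<phi> v a b"
  shows "rank_one_contraction3 d1 d2 d3 (mode2 d2 L \<phi>) v a (\<lambda>j. \<Sum>b'<d2. L j b' * b b')"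
  unfolding rank_one_contraction3_def
proof (intro allI impI)
  fix i j assume ij: "i < d1" "j < d2"
  have "contract3 d3 (mode2 d2 L \<phi>) v i j = (\<Sum>b'<d2. L j b' * (a i * b b'))"
    unfolding contract3_mode2[OF ij(2)]
    using assms ij unfolding rank_one_contraction3_def by (intro sum.cong) auto
  also have "\<dots> = a i * (\<Sum>b'<d2. L j b' * b b')" by (simp add: sum_distrib_left ac_simps)
  finally show "contract3 d3 (mode2 d2 L \<phi>) v i j = a i * (\<Sum>b'<d2. L j b' * b b')" .
qed

lemma rank_one_contraction3_mode3:
  assumes "rank_one_contraction3 d1 d2 d3 \<phi> v a b" "inverse_pair d3 L M"
  shows "rank_one_contraction3 d1 d2 d3 (mode3 d3 L \<phi>) (\<lambda>k. \<Sum>b'<d3. M b' k * v b') a b"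
proof -
  have "contract3 d3 (mode3 d3 L \<phi>) (\<lambda>k. \<Sum>b'<d3. M b' k * v b') i j = contract3 d3 \<phi> v i j" for i j
    unfolding contract3_mode3
    by (rule contract3_cong) (simp add: inverse_pair_cancel_transpose[OF assms(2)])
  then show ?thesis using assms(1) unfolding rank_one_contraction3_def by simp
qed

definition rank_one_in_span3 :: "nat \<Rightarrow> nat \<Rightarrow> nat \<Rightarrow> tensor3 \<Rightarrow> bool" where
  "rank_one_in_span3 d1 d2 d3 \<phi> \<longleftrightarrow>
     (\<exists>v a b. nonzero_vec d1 a \<and> nonzero_vec d2 b \<and> rank_one_contraction3 d1 d2 d3 \<phi> v a b)"

lemma rank_one_in_span3_invariant: "slocc_invariant d1 d2 d3 (rank_one_in_span3 d1 d2 d3)"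
proof (rule slocc_invariantI)
  fix \<phi> L M assume "rank_one_in_span3 d1 d2 d3 \<phi>"
  then obtain v a b where a: "nonzero_vec d1 a" and b: "nonzero_vec d2 b"
    and rk: "rank_one_contraction3 d1 d2 d3 \<phi> v a b"
    unfolding rank_one_in_span3_def by blast
  show "rank_one_in_span3 d1 d2 d3 (mode1 d1 L \<phi>)" if "inverse_pair d1 L M"
    unfolding rank_one_in_span3_def
    using nonzero_vec_apply[OF that a] b rank_one_contraction3_mode1[OF rk] by blast
  show "rank_one_in_span3 d1 d2 d3 (mode2 d2 L \<phi>)" if "inverse_pair d2 L M"
    unfolding rank_one_in_span3_def
    using nonzero_vec_apply[OF that b] a rank_one_contraction3_mode2[OF rk] by blast
  show "rank_one_in_span3 d1 d2 d3 (mode3 d3 L \<phi>)" if "inverse_pair d3 L M"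
    unfolding rank_one_in_span3_def
    using a b rank_one_contraction3_mode3[OF rk that] by blast
qed

definition two_rank_one_in_span3 :: "nat \<Rightarrow> nat \<Rightarrow> nat \<Rightarrow> tensor3 \<Rightarrow> bool" where
  "two_rank_one_in_span3 d1 d2 d3 \<phi> \<longleftrightarrow> (\<exists>v a b v' a' b'.
     nonzero_vec d2 b \<and> nonzero_vec d2 b' \<and> indep_pair d1 a a' \<and>
     rank_one_contraction3 d1 d2 d3 \<phi> v a b \<and> rank_one_contraction3 d1 d2 d3 \<phi> v' a' b')"

lemma two_rank_one_in_span3_invariant: "slocc_invariant d1 d2 d3 (two_rank_one_in_span3 d1 d2 d3)"
proof (rule slocc_invariantI)
  fix \<phi> L M assume "two_rank_one_in_span3 d1 d2 d3 \<phi>"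
  then obtain v a b v' a' b' where b: "nonzero_vec d2 b" "nonzero_vec d2 b'"
    and a: "indep_pair d1 a a'"
    and rk: "rank_one_contraction3 d1 d2 d3 \<phi> v a b" "rank_one_contraction3 d1 d2 d3 \<phi> v' a' b'"
    unfolding two_rank_one_in_span3_def by blast
  show "two_rank_one_in_span3 d1 d2 d3 (mode1 d1 L \<phi>)" if "inverse_pair d1 L M"
    unfolding two_rank_one_in_span3_def using b indep_pair_apply[OF that a]
      rank_one_contraction3_mode1[OF rk(1)] rank_one_contraction3_mode1[OF rk(2)] by blast
  show "two_rank_one_in_span3 d1 d2 d3 (mode2 d2 L \<phi>)" if "inverse_pair d2 L M"
    unfolding two_rank_one_in_span3_def
    using nonzero_vec_apply[OF that b(1)] nonzero_vec_apply[OF that b(2)] a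
      rank_one_contraction3_mode2[OF rk(1)] rank_one_contraction3_mode2[OF rk(2)] by blast
  show "two_rank_one_in_span3 d1 d2 d3 (mode3 d3 L \<phi>)" if "inverse_pair d3 L M"
    unfolding two_rank_one_in_span3_def using a b
      rank_one_contraction3_mode3[OF rk(1) that] rank_one_contraction3_mode3[OF rk(2) that] by blast
qed

lemma last_nonzero_coordinate:
  assumes "nonzero_vec n u"
  obtains J where "J < n" "u J \<noteq> 0" "\<And>j. J < j \<Longrightarrow> j < n \<Longrightarrow> u j = 0"
proof -
  define S where "S = {j. j < n \<and> u j \<noteq> 0}"
  have S: "finite S" "S \<noteq> {}" using assms unfolding S_def nonzero_vec_def by auto
  show ?thesis
  proof
    show "Max S < n" "u (Max S) \<noteq> 0" using Max_in[OF S] unfolding S_def by auto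
    show "u j = 0" if "Max S < j" "j < n" for j
    proof (rule ccontr)
      assume "u j \<noteq> 0"
      then have "j \<le> Max S" using Max_ge[OF S(1)] \<open>j < n\<close> unfolding S_def by blast
      with \<open>Max S < j\<close> show False by simp
    qed
  qed
qed

text \<open>The product of two nonzero polynomials is nonzero: for nonzero coefficient vectors
  \<open>u, v\<close> some antidiagonal sum \<open>\<Sum>\<^bsub>j+k=s\<^esub> u\<^sub>j v\<^sub>k\<close> is nonzero (take \<open>s\<close> the sum of the degrees).\<close>

lemma antidiagonal_product_nonzero:
  fixes u v :: "nat \<Rightarrow> complex"
  assumes "nonzero_vec m u" "nonzero_vec n v"
  shows "\<exists>s. (\<Sum>j<m. \<Sum>k<n. if j + k = s then u j * v k else 0) \<noteq> 0"
proof -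
  obtain J where J: "J < m" "u J \<noteq> 0" and u: "\<And>j. J < j \<Longrightarrow> j < m \<Longrightarrow> u j = 0"
    using last_nonzero_coordinate[OF assms(1)] by blast
  obtain K where K: "K < n" "v K \<noteq> 0" and v: "\<And>k. K < k \<Longrightarrow> k < n \<Longrightarrow> v k = 0"
    using last_nonzero_coordinate[OF assms(2)] by blast
  have row: "(\<Sum>k<n. if j + k = J + K then u j * v k else 0) = (if j = J then u J * v K else 0)"
    if "j < m" for j
  proof (cases "j = J")
    case True
    then show ?thesis by (subst sum_eq_single[of _ K]) (use K in auto)
  next
    case False
    have "(if j + k = J + K then u j * v k else 0) = 0" if "k < n" for k
      using u[of j] v[of k] \<open>j < m\<close> \<open>k < n\<close> False by (cases "J < j") auto
    then show ?thesis using False by (intro trans[OF sum.neutral]) auto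
  qed
  have "(\<Sum>j<m. \<Sum>k<n. if j + k = J + K then u j * v k else 0) = (\<Sum>j<m. if j = J then u J * v K else 0)"
    using row by (intro sum.cong) auto
  also have "\<dots> = u J * v K" using J(1) by simp
  finally show ?thesis using J K by (intro exI[of _ "J + K"]) simp
qed

text \<open>Spreading \<open>{0..<d2 * d3}\<close> injectively over the grid \<open>{0..<d2} \<times> {0..<d3}\<close> so that
  the first \<open>d2\<close> indices lie on the diagonal.\<close>

definition spread_pos :: "nat \<Rightarrow> nat \<Rightarrow> nat \<Rightarrow> nat \<times> nat" where
  "spread_pos d2 d3 i = (i mod d2, (i mod d2 + i div d2) mod d3)"

lemma add_mod_cancel_less:
  fixes r q q' d :: nat
  assumes "(r + q) mod d = (r + q') mod d" "q < d" "q' < d"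
  shows "q = q'"
proof -
  have less_eq_case: "a = b" if "(r + a) mod d = (r + b) mod d" "a \<le> b" "b < d" for a b :: nat
  proof -
    have "d dvd (r + b) - (r + a)" using mod_eq_dvd_iff_nat[of "r + a" "r + b" d] that by simp
    then have "d dvd b - a" by simp
    moreover have "b - a < d" using that by simp
    ultimately show "a = b" using nat_dvd_not_less that by fastforce
  qed
  show ?thesis
    using less_eq_case[OF assms(1)] less_eq_case[OF assms(1)[symmetric]] assms(2,3) by fastforce
qed

text \<open>The spread positions of \<open>i < d2 * d3\<close> are pairwise distinct, since \<open>i mod d2\<close> and
  \<open>i div d2\<close> can be recovered from them.\<close>

lemma spread_pos_inj:
  assumes "0 < d2" "i < d2 * d3" "i' < d2 * d3" "spread_pos d2 d3 i = spread_pos d2 d3 i'"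
  shows "i = i'"
proof -
  have r: "i mod d2 = i' mod d2" using assms(4) unfolding spread_pos_def by simp
  have q: "i div d2 < d3" "i' div d2 < d3" using assms(1-3)
    by (simp_all add: div_less_iff_less_mult mult.commute)
  have "(i mod d2 + i div d2) mod d3 = (i mod d2 + i' div d2) mod d3"
    using assms(4) r unfolding spread_pos_def by simp
  then have "i div d2 = i' div d2" using add_mod_cancel_less q by blast
  then show ?thesis using r by (metis div_mult_mod_eq)
qed

lemma spread_pos_bound: "0 < d2 \<Longrightarrow> 0 < d3 \<Longrightarrow> fst (spread_pos d2 d3 i) < d2 \<and> snd (spread_pos d2 d3 i) < d3"
  unfolding spread_pos_def by simp

text \<open>When \<open>d1 < d2 * d3\<close> some position is missed, so \<open>\<Psi>\<close> annihilates a product.\<close>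

definition Psi_spread :: "nat \<Rightarrow> nat \<Rightarrow> nat \<Rightarrow> tensor3" where
  "Psi_spread d1 d2 d3 = (\<lambda>i j k. if i < d1 \<and> (j, k) = spread_pos d2 d3 i then 1 else 0)"

lemma Psi_spread_space: "0 < d2 \<Longrightarrow> 0 < d3 \<Longrightarrow> Psi_spread d1 d2 d3 \<in> tensor_space d1 d2 d3"
  unfolding tensor_space_def Psi_spread_def
  by (auto simp: spread_pos_def) (metis mod_less_divisor not_le)+

text \<open>Each slice of \<open>\<Psi>\<close> is a distinct unit matrix, and the first \<open>d2\<close> slices cover all rows
  and all columns of the grid; so \<open>\<Psi>\<close> is concise.\<close>

lemma Psi_spread_concise:
  assumes "0 < d3" "d3 \<le> d2" "d2 \<le> d1" "d1 \<le> d2 * d3"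
  shows "concise d1 d2 d3 (Psi_spread d1 d2 d3)"
proof (rule concise_by_echelon)
  fix i0 assume i0: "i0 < d1"
  obtain j k where jk: "spread_pos d2 d3 i0 = (j, k)" by (cases "spread_pos d2 d3 i0")
  have "j < d2" "k < d3" using spread_pos_bound[of d2 d3 i0] jk assms by auto
  moreover have "Psi_spread d1 d2 d3 i j k = 0" if "i0 < i" "i < d1" for i
    using spread_pos_inj[of d2 i d3 i0] jk that assms unfolding Psi_spread_def by auto
  ultimately show "\<exists>j<d2. \<exists>k<d3. Psi_spread d1 d2 d3 i0 j k \<noteq> 0 \<and>
      (\<forall>i. i0 < i \<and> i < d1 \<longrightarrow> Psi_spread d1 d2 d3 i j k = 0)"
    using i0 jk unfolding Psi_spread_def by auto
next
  fix j0 assume j0: "j0 < d2"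
  then have "spread_pos d2 d3 j0 = (j0, j0 mod d3)" unfolding spread_pos_def by simp
  then show "\<exists>i<d1. \<exists>k<d3. Psi_spread d1 d2 d3 i j0 k \<noteq> 0 \<and>
      (\<forall>j. j0 < j \<and> j < d2 \<longrightarrow> Psi_spread d1 d2 d3 i j k = 0)"
    using j0 assms by (intro exI[of _ j0] exI[of _ "j0 mod d3"]) (auto simp: Psi_spread_def)
next
  fix k0 assume k0: "k0 < d3"
  then have "spread_pos d2 d3 k0 = (k0, k0)" unfolding spread_pos_def using assms by simp
  then show "\<exists>i<d1. \<exists>j<d2. Psi_spread d1 d2 d3 i j k0 \<noteq> 0 \<and>
      (\<forall>k. k0 < k \<and> k < d3 \<longrightarrow> Psi_spread d1 d2 d3 i j k = 0)"
    using k0 assms by (intro exI[of _ k0] exI[of _ k0]) (auto simp: Psi_spread_def)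
qed

lemma contract23_unit:
  assumes "j0 < d2" "k0 < d3"
  shows "contract23 d2 d3 \<phi> (\<lambda>j. if j = j0 then 1 else 0) (\<lambda>k. if k = k0 then 1 else 0) i = \<phi> i j0 k0"
proof -
  have "contract23 d2 d3 \<phi> (\<lambda>j. if j = j0 then 1 else 0) (\<lambda>k. if k = k0 then 1 else 0) i
      = (\<Sum>k<d3. \<phi> i j0 k * (if k = k0 then 1 else 0))"
    unfolding contract23_def by (subst sum_eq_single[of _ j0]) (use assms in auto)
  also have "\<dots> = \<phi> i j0 k0" by (subst sum_eq_single[of _ k0]) (use assms in auto)
  finally show ?thesis .
qed

text \<open>The position of \<open>d2 * d3 - 1 \<ge> d1\<close> is used by no slice of \<open>\<Psi>\<close>, so \<open>\<Psi>\<close> annihilates the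
  corresponding product of unit vectors.\<close>

lemma Psi_spread_annihilates_product:
  assumes "0 < d2" "0 < d3" "d1 < d2 * d3"
  shows "annihilates_product d1 d2 d3 (Psi_spread d1 d2 d3)"
proof -
  obtain j0 k0 where p: "spread_pos d2 d3 (d2 * d3 - 1) = (j0, k0)"
    by (cases "spread_pos d2 d3 (d2 * d3 - 1)")
  have b: "j0 < d2" "k0 < d3" using spread_pos_bound[OF assms(1,2)] p by (metis fst_conv snd_conv)+
  have "Psi_spread d1 d2 d3 i j0 k0 = 0" if "i < d1" for i
    using spread_pos_inj[of d2 i d3 "d2 * d3 - 1"] that assms p unfolding Psi_spread_def by auto
  then show ?thesis
    unfolding annihilates_product_def using b
    by (intro exI[of _ "\<lambda>j. if j = j0 then 1 else 0"] exI[of _ "\<lambda>k. if k = k0 then 1 else 0"])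
      (auto simp: contract23_unit nonzero_vec_def)
qed

text \<open>The first slice of \<open>\<Psi>\<close> is the rank-one matrix \<open>e\<^sub>0 e\<^sub>0\<^sup>T\<close>.\<close>

lemma Psi_spread_rank_one_in_span1:
  assumes "0 < d1" "0 < d2" "0 < d3"
  shows "rank_one_in_span1 d1 d2 d3 (Psi_spread d1 d2 d3)"
proof -
  have "contract1 d1 (Psi_spread d1 d2 d3) (\<lambda>i. if i = 0 then 1 else 0) j k
      = (if j = 0 then 1 else 0) * (if k = 0 then 1 else 0)" for j k
  proof -
    have "contract1 d1 (Psi_spread d1 d2 d3) (\<lambda>i. if i = 0 then 1 else 0) j k = Psi_spread d1 d2 d3 0 j k"
      unfolding contract1_def by (subst sum_eq_single[of _ 0]) (use assms in auto)
    then show ?thesis using assms unfolding Psi_spread_def spread_pos_def by auto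
  qed
  then show ?thesis
    unfolding rank_one_in_span1_def using assms
    by (intro exI[of _ "\<lambda>i. if i = 0 then 1 else 0"] exI[of _ "\<lambda>j. if j = 0 then 1 else 0"]
        exI[of _ "\<lambda>k. if k = 0 then 1 else 0"]) (auto simp: nonzero_vec_def)
qed

text \<open>Positions of the \<open>d2 \<times> d3\<close> grid.  \<open>antidiag_pos d2 n\<close> is the position on the \<open>n\<close>-th
  antidiagonal lying on the border \<open>k = 0\<close> or \<open>j = d2 - 1\<close>; \<open>interior_pos d2 t\<close> enumerates
  the remaining positions, those with \<open>j < d2 - 1\<close> and \<open>k \<ge> 1\<close>.\<close>

definition antidiag_pos :: "nat \<Rightarrow> nat \<Rightarrow> nat \<times> nat" where
  "antidiag_pos d2 n = (if n < d2 then (n, 0) else (d2 - 1, n - (d2 - 1)))"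

definition interior_pos :: "nat \<Rightarrow> nat \<Rightarrow> nat \<times> nat" where
  "interior_pos d2 t = (t mod (d2 - 1), 1 + t div (d2 - 1))"

lemma antidiag_pos:
  assumes "0 < d2" "0 < d3" "n < d2 + d3 - 1"
  shows "fst (antidiag_pos d2 n) < d2" "snd (antidiag_pos d2 n) < d3"
    "fst (antidiag_pos d2 n) + snd (antidiag_pos d2 n) = n"
    "snd (antidiag_pos d2 n) = 0 \<or> fst (antidiag_pos d2 n) = d2 - 1"
  using assms unfolding antidiag_pos_def by auto

lemma off_border_ne_antidiag_pos:
  assumes "fst p < d2 - 1" "1 \<le> snd p"
  shows "p \<noteq> antidiag_pos d2 n"
  using assms unfolding antidiag_pos_def by auto

lemma interior_pos_off_border:
  "2 \<le> d2 \<Longrightarrow> fst (interior_pos d2 t) < d2 - 1 \<and> 1 \<le> snd (interior_pos d2 t)"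
  unfolding interior_pos_def by simp

lemma interior_pos_bound:
  assumes "2 \<le> d2" "t < (d2 - 1) * (d3 - 1)"
  shows "snd (interior_pos d2 t) < d3"
proof -
  have "t div (d2 - 1) < d3 - 1" using assms by (simp add: div_less_iff_less_mult mult.commute)
  then show ?thesis unfolding interior_pos_def by simp
qed

lemma interior_pos_inj: "interior_pos d2 t = interior_pos d2 t' \<Longrightarrow> t = t'"
  unfolding interior_pos_def by (metis div_mult_mod_eq fst_conv snd_conv add_left_cancel)

lemma grid_split: "2 \<le> (d2::nat) \<Longrightarrow> 2 \<le> d3 \<Longrightarrow> (d2 - 1) * (d3 - 1) + (d2 + d3 - 1) = d2 * d3"
  by (cases d2; cases d3) (auto simp: algebra_simps)

text \<open>\<open>\<Phi>\<close> for \<open>d1 \<ge> d2 + d3 - 1\<close>: the first \<open>d2 + d3 - 1\<close> slices form the multiplication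
  tensor of polynomials of degrees \<open>< d2\<close> and \<open>< d3\<close>; the remaining slices are unit matrices at
  interior positions, which keeps the tensor concise.\<close>

definition Phi_poly :: "nat \<Rightarrow> nat \<Rightarrow> nat \<Rightarrow> tensor3" where
  "Phi_poly d1 d2 d3 = (\<lambda>i j k. if i < d1 \<and> j < d2 \<and> k < d3 then
      (if i < d2 + d3 - 1 then (if j + k = i then 1 else 0)
       else (if (j, k) = interior_pos d2 (i - (d2 + d3 - 1)) then 1 else 0)) else 0)"

lemma Phi_poly_space: "Phi_poly d1 d2 d3 \<in> tensor_space d1 d2 d3"
  unfolding tensor_space_def Phi_poly_def by auto

text \<open>Slice \<open>i0\<close> of \<open>\<Phi>\<close> has a nonzero entry at which all later slices vanish: the border
  position of its antidiagonal for the polynomial slices, its own interior position otherwise.\<close>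

lemma Phi_poly_slices_echelon:
  assumes "2 \<le> d3" "d3 \<le> d2" "d1 < d2 * d3" "i0 < d1"
  shows "\<exists>j<d2. \<exists>k<d3. Phi_poly d1 d2 d3 i0 j k \<noteq> 0 \<and>
      (\<forall>i. i0 < i \<and> i < d1 \<longrightarrow> Phi_poly d1 d2 d3 i j k = 0)"
proof -
  have d2: "2 \<le> d2" using assms by simp
  show ?thesis
  proof (cases "i0 < d2 + d3 - 1")
    case True
    let ?p = "antidiag_pos d2 i0"
    have p: "fst ?p < d2" "snd ?p < d3" "fst ?p + snd ?p = i0"
      using antidiag_pos[of d2 d3 i0] True assms by auto
    have ne: "interior_pos d2 t \<noteq> ?p" for t
      by (rule off_border_ne_antidiag_pos) (use interior_pos_off_border[OF d2] in auto)
    have "Phi_poly d1 d2 d3 i (fst ?p) (snd ?p) = 0" if "i0 < i" "i < d1" for i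
    proof (cases "i < d2 + d3 - 1")
      case True
      then show ?thesis using p that unfolding Phi_poly_def by auto
    next
      case False
      have "(fst ?p, snd ?p) \<noteq> interior_pos d2 (i - (d2 + d3 - 1))" using ne[of "i - (d2 + d3 - 1)"] by auto
      then show ?thesis using False unfolding Phi_poly_def by auto
    qed
    moreover have "Phi_poly d1 d2 d3 i0 (fst ?p) (snd ?p) \<noteq> 0"
      using p True assms(4) unfolding Phi_poly_def by auto
    ultimately show ?thesis using p(1,2) by blast
  next
    case False
    let ?t = "i0 - (d2 + d3 - 1)"
    have "?t < (d2 - 1) * (d3 - 1)"
      using grid_split[OF d2 assms(1)] False assms(3,4) by linarith
    then have p: "fst (interior_pos d2 ?t) < d2" "snd (interior_pos d2 ?t) < d3"
      using interior_pos_bound[OF d2] interior_pos_off_border[OF d2, of ?t] by auto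
    have "Phi_poly d1 d2 d3 i (fst (interior_pos d2 ?t)) (snd (interior_pos d2 ?t)) = 0"
      if "i0 < i" "i < d1" for i
      using interior_pos_inj[of d2 "i - (d2 + d3 - 1)" ?t] that False unfolding Phi_poly_def by auto
    moreover have "Phi_poly d1 d2 d3 i0 (fst (interior_pos d2 ?t)) (snd (interior_pos d2 ?t)) \<noteq> 0"
      using p False assms(4) unfolding Phi_poly_def by auto
    ultimately show ?thesis using p by blast
  qed
qed

text \<open>The polynomial slices cover all rows and columns, and the slices are in echelon form.\<close>

lemma Phi_poly_concise:
  assumes "2 \<le> d3" "d3 \<le> d2" "d2 + d3 - 1 \<le> d1" "d1 < d2 * d3"
  shows "concise d1 d2 d3 (Phi_poly d1 d2 d3)"
proof (rule concise_by_echelon)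
  fix i0 assume "i0 < d1"
  then show "\<exists>j<d2. \<exists>k<d3. Phi_poly d1 d2 d3 i0 j k \<noteq> 0 \<and>
      (\<forall>i. i0 < i \<and> i < d1 \<longrightarrow> Phi_poly d1 d2 d3 i j k = 0)"
    using assms by (intro Phi_poly_slices_echelon) auto
next
  fix j0 assume j0: "j0 < d2"
  have "Phi_poly d1 d2 d3 j0 j 0 = (if j = j0 then 1 else 0)" if "j < d2" for j
    using that j0 assms unfolding Phi_poly_def by auto
  then have "Phi_poly d1 d2 d3 j0 j0 0 \<noteq> 0" "\<forall>j. j0 < j \<and> j < d2 \<longrightarrow> Phi_poly d1 d2 d3 j0 j 0 = 0"
    using j0 by auto
  moreover have "j0 < d1" "0 < d3" using j0 assms by auto
  ultimately show "\<exists>i<d1. \<exists>k<d3. Phi_poly d1 d2 d3 i j0 k \<noteq> 0 \<and>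
      (\<forall>j. j0 < j \<and> j < d2 \<longrightarrow> Phi_poly d1 d2 d3 i j k = 0)" by blast
next
  fix k0 assume k0: "k0 < d3"
  have "Phi_poly d1 d2 d3 k0 0 k = (if k = k0 then 1 else 0)" if "k < d3" for k
    using that k0 assms unfolding Phi_poly_def by auto
  then have "Phi_poly d1 d2 d3 k0 0 k0 \<noteq> 0" "\<forall>k. k0 < k \<and> k < d3 \<longrightarrow> Phi_poly d1 d2 d3 k0 0 k = 0"
    using k0 by auto
  moreover have "k0 < d1" "0 < d2" using k0 assms by auto
  ultimately show "\<exists>i<d1. \<exists>j<d2. Phi_poly d1 d2 d3 i j k0 \<noteq> 0 \<and>
      (\<forall>k. k0 < k \<and> k < d3 \<longrightarrow> Phi_poly d1 d2 d3 i j k = 0)" by blast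
qed

text \<open>\<open>\<Phi>(\<cdot>, u, v)\<close> contains the coefficients of the product of the polynomials with
  coefficient vectors \<open>u\<close> and \<open>v\<close>, which is nonzero.\<close>

lemma Phi_poly_not_annihilates_product:
  assumes "d2 + d3 - 1 \<le> d1"
  shows "\<not> annihilates_product d1 d2 d3 (Phi_poly d1 d2 d3)"
proof
  assume "annihilates_product d1 d2 d3 (Phi_poly d1 d2 d3)"
  then obtain u v where uv: "nonzero_vec d2 u" "nonzero_vec d3 v"
    and zero: "\<forall>i<d1. contract23 d2 d3 (Phi_poly d1 d2 d3) u v i = 0"
    unfolding annihilates_product_def by blast
  obtain s where s: "(\<Sum>j<d2. \<Sum>k<d3. if j + k = s then u j * v k else 0) \<noteq> 0"
    using antidiagonal_product_nonzero[OF uv] by blast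
  show False
  proof (cases "s < d2 + d3 - 1")
    case True
    have "contract23 d2 d3 (Phi_poly d1 d2 d3) u v s = (\<Sum>j<d2. \<Sum>k<d3. if j + k = s then u j * v k else 0)"
      unfolding contract23_def Phi_poly_def using True assms by (intro sum.cong) auto
    then show False using s zero True assms by simp
  next
    case False
    then have "(\<Sum>j<d2. \<Sum>k<d3. if j + k = s then u j * v k else 0) = 0"
      by (intro sum.neutral ballI) auto
    then show False using s by simp
  qed
qed

text \<open>\<open>\<Phi>\<close> for \<open>d1 \<le> d2 + d3 - 2\<close>: slice \<open>i\<close> is \<open>E\<^bsub>P i\<^esub> - E\<^bsub>C i\<^esub>\<close>, where the off-border positions
  \<open>P i\<close> are spread over the interior grid and \<open>C i\<close> is the border position on the same
  antidiagonal.  All slices, hence all their combinations, have vanishing antidiagonal sums.\<close>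

definition hankel_pos :: "nat \<Rightarrow> nat \<Rightarrow> nat \<Rightarrow> nat \<times> nat" where
  "hankel_pos d2 d3 i = (fst (spread_pos (d2 - 1) (d3 - 1) i), snd (spread_pos (d2 - 1) (d3 - 1) i) + 1)"

definition hankel_partner :: "nat \<Rightarrow> nat \<Rightarrow> nat \<Rightarrow> nat \<times> nat" where
  "hankel_partner d2 d3 i = antidiag_pos d2 (fst (hankel_pos d2 d3 i) + snd (hankel_pos d2 d3 i))"

definition Phi_hankel :: "nat \<Rightarrow> nat \<Rightarrow> nat \<Rightarrow> tensor3" where
  "Phi_hankel d1 d2 d3 = (\<lambda>i j k. if i < d1 then
      (if (j, k) = hankel_pos d2 d3 i then 1 else if (j, k) = hankel_partner d2 d3 i then -1 else 0)
     else 0)"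

lemma hankel_pos_bound:
  assumes "2 \<le> d2" "2 \<le> d3"
  shows "fst (hankel_pos d2 d3 i) < d2 - 1" "1 \<le> snd (hankel_pos d2 d3 i)" "snd (hankel_pos d2 d3 i) < d3"
  using spread_pos_bound[of "d2 - 1" "d3 - 1" i] assms unfolding hankel_pos_def by auto

lemma hankel_pos_inj:
  assumes "2 \<le> d2" "i < (d2 - 1) * (d3 - 1)" "i' < (d2 - 1) * (d3 - 1)"
    and "hankel_pos d2 d3 i = hankel_pos d2 d3 i'"
  shows "i = i'"
  using spread_pos_inj[of "d2 - 1" i "d3 - 1" i'] assms unfolding hankel_pos_def by (simp add: prod_eq_iff)

lemma hankel_partner:
  assumes "2 \<le> d2" "2 \<le> d3"
  shows "fst (hankel_partner d2 d3 i) < d2" "snd (hankel_partner d2 d3 i) < d3"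
    "fst (hankel_partner d2 d3 i) + snd (hankel_partner d2 d3 i) = fst (hankel_pos d2 d3 i) + snd (hankel_pos d2 d3 i)"
    "hankel_partner d2 d3 i \<noteq> hankel_pos d2 d3 i"
proof -
  note P = hankel_pos_bound[OF assms, of i]
  have "fst (hankel_pos d2 d3 i) + snd (hankel_pos d2 d3 i) < d2 + d3 - 1" using P by linarith
  then show "fst (hankel_partner d2 d3 i) < d2" "snd (hankel_partner d2 d3 i) < d3"
    "fst (hankel_partner d2 d3 i) + snd (hankel_partner d2 d3 i) = fst (hankel_pos d2 d3 i) + snd (hankel_pos d2 d3 i)"
    using antidiag_pos[of d2 d3] assms unfolding hankel_partner_def by auto
  show "hankel_partner d2 d3 i \<noteq> hankel_pos d2 d3 i"
    using off_border_ne_antidiag_pos[OF P(1,2)] unfolding hankel_partner_def by metis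
qed

text \<open>Being distinct points of one antidiagonal, \<open>P i\<close> and \<open>C i\<close> share no row and no column.\<close>

lemma hankel_partner_separated:
  assumes "2 \<le> d2" "2 \<le> d3"
  shows "fst (hankel_partner d2 d3 i) \<noteq> fst (hankel_pos d2 d3 i)"
    "snd (hankel_partner d2 d3 i) \<noteq> snd (hankel_pos d2 d3 i)"
  using hankel_partner(3,4)[OF assms, of i] by (auto simp: prod_eq_iff)

lemma Phi_hankel_space:
  assumes "2 \<le> d2" "2 \<le> d3"
  shows "Phi_hankel d1 d2 d3 \<in> tensor_space d1 d2 d3"
proof -
  have "Phi_hankel d1 d2 d3 i j k = 0" if out: "d1 \<le> i \<or> d2 \<le> j \<or> d3 \<le> k" for i j k
  proof (cases "d1 \<le> i")
    case False
    have outside: "(j, k) \<noteq> p" if "fst p < d2" "snd p < d3" for p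
      using out False that by (cases p) auto
    have "(j, k) \<noteq> hankel_pos d2 d3 i" "(j, k) \<noteq> hankel_partner d2 d3 i"
      using hankel_pos_bound[OF assms, of i] hankel_partner(1,2)[OF assms, of i]
      by (simp_all add: outside)
    then show ?thesis unfolding Phi_hankel_def by simp
  qed (simp add: Phi_hankel_def)
  then show ?thesis unfolding tensor_space_def by blast
qed

text \<open>Every column \<open>j0\<close> of the grid is met by some \<open>P i\<close> (namely \<open>P j0\<close>) or, for the last
  column, by \<open>C (d2 - 2)\<close>; every row \<open>k0\<close> by \<open>P (k0 - 1)\<close> or, for \<open>k0 = 0\<close>, by \<open>C 0\<close>.\<close>

lemma hankel_columns_covered:
  assumes d: "2 \<le> d2" "2 \<le> d3" and "d2 \<le> d1" "j0 < d2"
  shows "\<exists>i<d1. j0 = fst (hankel_pos d2 d3 i) \<or> j0 = fst (hankel_partner d2 d3 i)"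
proof (cases "j0 < d2 - 1")
  case True
  then have "fst (hankel_pos d2 d3 j0) = j0" unfolding hankel_pos_def spread_pos_def by simp
  then show ?thesis using assms by (intro exI[of _ j0]) auto
next
  case False
  have "fst (hankel_pos d2 d3 (d2 - 2)) = d2 - 2" using d unfolding hankel_pos_def spread_pos_def by simp
  then have "fst (hankel_partner d2 d3 (d2 - 2)) = d2 - 1"
    using hankel_pos_bound(2)[OF d, of "d2 - 2"] d unfolding hankel_partner_def antidiag_pos_def by auto
  moreover have "j0 = d2 - 1" using False assms by simp
  ultimately show ?thesis using assms by (intro exI[of _ "d2 - 2"]) auto
qed

lemma hankel_rows_covered:
  assumes d: "2 \<le> d2" "2 \<le> d3" and "d3 \<le> d2" "d3 \<le> d1" "k0 < d3"
  shows "\<exists>i<d1. k0 = snd (hankel_pos d2 d3 i) \<or> k0 = snd (hankel_partner d2 d3 i)"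
proof (cases "k0 = 0")
  case True
  have "hankel_pos d2 d3 0 = (0, 1)" using d unfolding hankel_pos_def spread_pos_def by simp
  then have "snd (hankel_partner d2 d3 0) = 0" using d unfolding hankel_partner_def antidiag_pos_def by simp
  then show ?thesis using True assms by (intro exI[of _ 0]) auto
next
  case False
  then have "snd (hankel_pos d2 d3 (k0 - 1)) = k0"
    using assms unfolding hankel_pos_def spread_pos_def by auto
  then show ?thesis using False assms by (intro exI[of _ "k0 - 1"]) auto
qed

lemma interior_grid_large:
  assumes "3 \<le> d3" "d3 \<le> (d2::nat)"
  shows "d2 + d3 - 2 \<le> (d2 - 1) * (d3 - 1)"
proof -
  obtain a b where "d2 = a + 3" "d3 = b + 3"
    using assms by (metis add.commute le_add_diff_inverse le_trans)
  then show ?thesis by (simp add: algebra_simps)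
qed

text \<open>Each slice has a private entry at \<open>P i\<close>, and every row and column of the grid carries a
  private entry of some slice; so \<open>\<Phi>\<close> is concise.\<close>

lemma Phi_hankel_concise:
  assumes "3 \<le> d3" "d3 \<le> d2" "d2 \<le> d1" "d1 \<le> d2 + d3 - 2"
  shows "concise d1 d2 d3 (Phi_hankel d1 d2 d3)"
proof -
  have d: "2 \<le> d2" "2 \<le> d3" using assms by auto
  have d1: "d1 \<le> (d2 - 1) * (d3 - 1)"
    using interior_grid_large[OF assms(1,2)] assms(4) by linarith
  note P = hankel_pos_bound[OF d] and C = hankel_partner[OF d] and sep = hankel_partner_separated[OF d]
  let ?\<phi> = "Phi_hankel d1 d2 d3"
  show ?thesis
  proof (rule concise_by_echelon)
    fix i0 assume i0: "i0 < d1"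
    let ?p = "hankel_pos d2 d3 i0"
    have "?\<phi> i (fst ?p) (snd ?p) = 0" if "i0 < i" "i < d1" for i
    proof -
      have "hankel_pos d2 d3 i \<noteq> ?p" using hankel_pos_inj[OF d(1), of i d3 i0] that i0 d1 by auto
      moreover have "hankel_partner d2 d3 i \<noteq> ?p"
        using off_border_ne_antidiag_pos[OF P(1,2), of i0] unfolding hankel_partner_def by metis
      ultimately show ?thesis using that unfolding Phi_hankel_def by auto
    qed
    moreover have "?\<phi> i0 (fst ?p) (snd ?p) \<noteq> 0" using i0 unfolding Phi_hankel_def by simp
    moreover have "fst ?p < d2" "snd ?p < d3" using P[of i0] by auto
    ultimately show "\<exists>j<d2. \<exists>k<d3. ?\<phi> i0 j k \<noteq> 0 \<and> (\<forall>i. i0 < i \<and> i < d1 \<longrightarrow> ?\<phi> i j k = 0)"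
      by blast
  next
    fix j0 assume j0: "j0 < d2"
    obtain i where i: "i < d1" and hit: "j0 = fst (hankel_pos d2 d3 i) \<or> j0 = fst (hankel_partner d2 d3 i)"
      using hankel_columns_covered[OF d assms(3) j0] by blast
    let ?k = "if j0 = fst (hankel_pos d2 d3 i) then snd (hankel_pos d2 d3 i) else snd (hankel_partner d2 d3 i)"
    have "?\<phi> i j ?k = 0" if "j \<noteq> j0" for j
      using hit that sep[of i] i unfolding Phi_hankel_def by (auto simp: prod_eq_iff)
    moreover have "?\<phi> i j0 ?k \<noteq> 0" using hit sep[of i] i unfolding Phi_hankel_def by auto
    moreover have "?k < d3" using P[of i] C(2)[of i] by auto
    ultimately show "\<exists>i<d1. \<exists>k<d3. ?\<phi> i j0 k \<noteq> 0 \<and> (\<forall>j. j0 < j \<and> j < d2 \<longrightarrow> ?\<phi> i j k = 0)"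
      using i by (metis less_irrefl)
  next
    fix k0 assume k0: "k0 < d3"
    obtain i where i: "i < d1" and hit: "k0 = snd (hankel_pos d2 d3 i) \<or> k0 = snd (hankel_partner d2 d3 i)"
      using hankel_rows_covered[OF d assms(2) order_trans[OF assms(2,3)] k0] by blast
    let ?j = "if k0 = snd (hankel_pos d2 d3 i) then fst (hankel_pos d2 d3 i) else fst (hankel_partner d2 d3 i)"
    have "?\<phi> i ?j k = 0" if "k \<noteq> k0" for k
      using hit that sep[of i] i unfolding Phi_hankel_def by (auto simp: prod_eq_iff)
    moreover have "?\<phi> i ?j k0 \<noteq> 0" using hit sep[of i] i unfolding Phi_hankel_def by auto
    moreover have "?j < d2" using P[of i] C(1)[of i] by auto
    ultimately show "\<exists>i<d1. \<exists>j<d2. ?\<phi> i j k0 \<noteq> 0 \<and> (\<forall>k. k0 < k \<and> k < d3 \<longrightarrow> ?\<phi> i j k = 0)"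
      using i by (metis less_irrefl)
  qed
qed

lemma sum_grid_point:
  fixes p :: "nat \<times> nat"
  assumes "fst p < a" "snd p < b"
  shows "(\<Sum>j<a. \<Sum>k<b. (if j + k = s then 1 else 0) * (if (j, k) = p then 1 else 0))
       = (if fst p + snd p = s then (1::complex) else 0)"
proof -
  let ?F = "\<lambda>j k. (if j + k = s then 1 else 0) * (if (j, k) = p then 1 else (0::complex))"
  have "(\<Sum>j<a. \<Sum>k<b. ?F j k) = (\<Sum>k<b. ?F (fst p) k)"
    by (rule sum_eq_single) (auto simp: prod_eq_iff assms)
  also have "\<dots> = ?F (fst p) (snd p)"
    by (rule sum_eq_single) (auto simp: prod_eq_iff assms)
  finally show ?thesis by simp
qed

lemma Phi_hankel_antidiagonal_sums:
  assumes "2 \<le> d2" "2 \<le> d3" "i < d1"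
  shows "(\<Sum>j<d2. \<Sum>k<d3. (if j + k = s then 1 else 0) * Phi_hankel d1 d2 d3 i j k) = 0"
proof -
  let ?P = "hankel_pos d2 d3 i" and ?C = "hankel_partner d2 d3 i"
  have slice: "Phi_hankel d1 d2 d3 i j k = (if (j, k) = ?P then 1 else 0) - (if (j, k) = ?C then 1 else 0)" for j k
    using assms(3) hankel_partner(4)[OF assms(1,2), of i] unfolding Phi_hankel_def by auto
  have "(\<Sum>j<d2. \<Sum>k<d3. (if j + k = s then 1 else 0) * Phi_hankel d1 d2 d3 i j k)
      = (\<Sum>j<d2. \<Sum>k<d3. (if j + k = s then 1 else 0) * (if (j, k) = ?P then 1 else 0))
        - (\<Sum>j<d2. \<Sum>k<d3. (if j + k = s then 1 else 0) * (if (j, k) = ?C then 1 else 0))"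
    unfolding slice by (simp add: right_diff_distrib sum_subtractf)
  also have "\<dots> = 0"
    using hankel_pos_bound[OF assms(1,2), of i] hankel_partner[OF assms(1,2), of i]
    by (simp add: sum_grid_point)
  finally show ?thesis .
qed

text \<open>Hence every matrix in the span of the slices has zero antidiagonal sums, while a
  nonzero rank-one matrix \<open>u v\<^sup>T\<close> has a nonzero one.\<close>

lemma Phi_hankel_not_rank_one_in_span1:
  assumes d: "2 \<le> d2" "2 \<le> d3"
  shows "\<not> rank_one_in_span1 d1 d2 d3 (Phi_hankel d1 d2 d3)"
proof
  assume "rank_one_in_span1 d1 d2 d3 (Phi_hankel d1 d2 d3)"
  then obtain c u v where uv: "nonzero_vec d2 u" "nonzero_vec d3 v"
    and rk: "\<forall>j<d2. \<forall>k<d3. contract1 d1 (Phi_hankel d1 d2 d3) c j k = u j * v k"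
    unfolding rank_one_in_span1_def by blast
  obtain s where s: "(\<Sum>j<d2. \<Sum>k<d3. if j + k = s then u j * v k else 0) \<noteq> 0"
    using antidiagonal_product_nonzero[OF uv] by blast
  let ?X = "\<lambda>j k. if j + k = s then 1 else (0::complex)"
  have "(\<Sum>j<d2. \<Sum>k<d3. if j + k = s then u j * v k else 0)
      = (\<Sum>j<d2. \<Sum>k<d3. \<Sum>i<d1. c i * (?X j k * Phi_hankel d1 d2 d3 i j k))"
    using rk unfolding contract1_def by (intro sum.cong refl) (auto simp: sum_distrib_left ac_simps)
  also have "\<dots> = (\<Sum>j<d2. \<Sum>i<d1. \<Sum>k<d3. c i * (?X j k * Phi_hankel d1 d2 d3 i j k))"
    by (rule sum_swap_inner)
  also have "\<dots> = (\<Sum>i<d1. c i * (\<Sum>j<d2. \<Sum>k<d3. ?X j k * Phi_hankel d1 d2 d3 i j k))"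
    by (subst sum.swap) (simp add: sum_distrib_left)
  also have "\<dots> = 0" using Phi_hankel_antidiagonal_sums[OF d] by simp
  finally show False using s by simp
qed

lemma sum_less_2: "(\<Sum>k<(2::nat). f k) = f 0 + (f 1 :: complex)"
  by (simp add: numeral_2_eq_2)

lemma less_2_cases: "(k::nat) < 2 \<longleftrightarrow> k = 0 \<or> k = 1"
  by auto

text \<open>The tensors for \<open>d3 = 2\<close> and \<open>d1 = d2 = d\<close>.  \<open>\<Psi> = e\<^sub>0 \<otimes> e\<^sub>0 \<otimes> e\<^sub>0 + \<Sum>\<^sub>i\<^sub>\<ge>\<^sub>1 e\<^sub>i \<otimes> e\<^sub>i \<otimes> e\<^sub>1\<close>
  has the rank-one slice \<open>e\<^sub>0 e\<^sub>0\<^sup>T\<close>; the slices of \<open>\<Phi> = \<Sum>\<^sub>i e\<^sub>i \<otimes> e\<^sub>i \<otimes> (e\<^sub>0 + i e\<^sub>1)\<close> span a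
  pencil of diagonal matrices with pairwise distinct eigenvalue ratios.\<close>

definition Psi_diag :: "nat \<Rightarrow> tensor3" where
  "Psi_diag d = (\<lambda>i j k. if i < d \<and> j = i \<and> k = (if i = 0 then 0 else 1) then 1 else 0)"

definition Phi_pencil :: "nat \<Rightarrow> tensor3" where
  "Phi_pencil d = (\<lambda>i j k. if i < d \<and> j = i \<and> k < 2 then (if k = 0 then 1 else of_nat i) else 0)"

lemma Psi_diag_space: "Psi_diag d \<in> tensor_space d d 2"
  unfolding tensor_space_def Psi_diag_def by auto

lemma Phi_pencil_space: "Phi_pencil d \<in> tensor_space d d 2"
  unfolding tensor_space_def Phi_pencil_def by auto

lemma Psi_diag_concise:
  assumes "2 \<le> d"
  shows "concise d d 2 (Psi_diag d)"
proof (rule concise_by_echelon)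
  fix i0 :: nat assume "i0 < d"
  then show "\<exists>j<d. \<exists>k<2. Psi_diag d i0 j k \<noteq> 0 \<and> (\<forall>i. i0 < i \<and> i < d \<longrightarrow> Psi_diag d i j k = 0)"
    by (intro exI[of _ i0] conjI exI[of _ "if i0 = 0 then 0 else 1"]) (auto simp: Psi_diag_def)
next
  fix j0 :: nat assume "j0 < d"
  then show "\<exists>i<d. \<exists>k<2. Psi_diag d i j0 k \<noteq> 0 \<and> (\<forall>j. j0 < j \<and> j < d \<longrightarrow> Psi_diag d i j k = 0)"
    by (intro exI[of _ j0] conjI exI[of _ "if j0 = 0 then 0 else 1"]) (auto simp: Psi_diag_def)
next
  fix k0 :: nat assume "k0 < 2"
  then show "\<exists>i<d. \<exists>j<d. Psi_diag d i j k0 \<noteq> 0 \<and> (\<forall>k. k0 < k \<and> k < 2 \<longrightarrow> Psi_diag d i j k = 0)"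
    using assms by (intro exI[of _ k0] conjI exI[of _ k0]) (auto simp: Psi_diag_def)
qed

lemma Phi_pencil_concise:
  assumes "2 \<le> d"
  shows "concise d d 2 (Phi_pencil d)"
proof (rule concise_by_echelon)
  fix i0 :: nat assume "i0 < d"
  then show "\<exists>j<d. \<exists>k<2. Phi_pencil d i0 j k \<noteq> 0 \<and> (\<forall>i. i0 < i \<and> i < d \<longrightarrow> Phi_pencil d i j k = 0)"
    by (intro exI[of _ i0] conjI exI[of _ 0]) (auto simp: Phi_pencil_def)
next
  fix j0 :: nat assume "j0 < d"
  then show "\<exists>i<d. \<exists>k<2. Phi_pencil d i j0 k \<noteq> 0 \<and> (\<forall>j. j0 < j \<and> j < d \<longrightarrow> Phi_pencil d i j k = 0)"
    by (intro exI[of _ j0] conjI exI[of _ 0]) (auto simp: Phi_pencil_def)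
next
  fix k0 :: nat assume "k0 < 2"
  then show "\<exists>i<d. \<exists>j<d. Phi_pencil d i j k0 \<noteq> 0 \<and> (\<forall>k. k0 < k \<and> k < 2 \<longrightarrow> Phi_pencil d i j k = 0)"
    using assms by (intro exI[of _ k0] conjI exI[of _ k0]) (auto simp: Phi_pencil_def)
qed

lemma Psi_diag_first_slice:
  "rank_one_contraction3 d d 2 (Psi_diag d)
     (\<lambda>k. if k = 0 then 1 else 0) (\<lambda>i. if i = 0 then 1 else 0) (\<lambda>j. if j = 0 then 1 else 0)"
  unfolding rank_one_contraction3_def contract3_def Psi_diag_def by (auto simp: sum_less_2)

lemma Psi_diag_rank_one_in_span3:
  assumes "0 < d"
  shows "rank_one_in_span3 d d 2 (Psi_diag d)"
proof -
  have "nonzero_vec d (\<lambda>i. if i = 0 then 1 else 0)" using assms unfolding nonzero_vec_def by auto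
  then show ?thesis unfolding rank_one_in_span3_def using Psi_diag_first_slice by blast
qed

text \<open>A combination \<open>\<Phi>(\<cdot>, \<cdot>, v) = diag(v\<^sub>0 + i v\<^sub>1)\<close> of rank one has exactly one nonzero
  diagonal entry; but \<open>v\<^sub>0 + i v\<^sub>1\<close> vanishes for at most one \<open>i\<close> unless \<open>v = 0\<close>, so this needs
  \<open>d \<le> 2\<close>.\<close>

lemma Phi_pencil_not_rank_one_in_span3:
  assumes "3 \<le> d"
  shows "\<not> rank_one_in_span3 d d 2 (Phi_pencil d)"
proof
  assume "rank_one_in_span3 d d 2 (Phi_pencil d)"
  then obtain v a b where a: "nonzero_vec d a" and b: "nonzero_vec d b"
    and rk: "rank_one_contraction3 d d 2 (Phi_pencil d) v a b"
    unfolding rank_one_in_span3_def by blast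
  have R: "a i * b j = (if j = i then v 0 + of_nat i * v 1 else 0)" if "i < d" "j < d" for i j
  proof -
    have "a i * b j = contract3 2 (Phi_pencil d) v i j"
      using rk that unfolding rank_one_contraction3_def by simp
    also have "\<dots> = (if j = i then v 0 + of_nat i * v 1 else 0)"
      using that(1) unfolding contract3_def Phi_pencil_def by (simp add: sum_less_2)
    finally show ?thesis .
  qed
  obtain i0 where i0: "i0 < d" "a i0 \<noteq> 0" using a unfolding nonzero_vec_def by blast
  obtain j0 where j0: "j0 < d" "b j0 \<noteq> 0" using b unfolding nonzero_vec_def by blast
  have "j0 = i0" using R[OF i0(1) j0(1)] i0 j0 by (cases "j0 = i0") auto
  have zero: "v 0 + of_nat i * v 1 = 0" if "i < d" "i \<noteq> i0" for i
  proof -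
    have "a i = 0" using R[of i i0] that i0 j0 \<open>j0 = i0\<close> by simp
    then show ?thesis using R[of i i] that by simp
  qed
  define i1 where "i1 = (if i0 = 0 then 1 else (0::nat))"
  define i2 where "i2 = (if i0 = 2 then 1 else (2::nat))"
  have i12: "i1 < d" "i2 < d" "i1 \<noteq> i0" "i2 \<noteq> i0" "i1 \<noteq> i2"
    using assms unfolding i1_def i2_def by auto
  have "(of_nat i1 - of_nat i2) * v 1 = (v 0 + of_nat i1 * v 1) - (v 0 + of_nat i2 * v 1)"
    by (simp add: algebra_simps)
  also have "\<dots> = 0" using zero i12 by simp
  finally have "v 1 = 0" using i12(5) by simp
  then have "v 0 = 0" using zero[of i1] i12 by simp
  then have "a i0 * b i0 = 0" using R[of i0 i0] i0 \<open>v 1 = 0\<close> by simp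
  then show False using i0 j0 \<open>j0 = i0\<close> by simp
qed

text \<open>For \<open>d = 2\<close>, \<open>\<Psi>\<close> is the GHZ state, whose slices \<open>e\<^sub>0 e\<^sub>0\<^sup>T\<close> and \<open>e\<^sub>1 e\<^sub>1\<^sup>T\<close> are rank one.\<close>

lemma Psi_diag_two_rank_one_in_span3: "two_rank_one_in_span3 2 2 2 (Psi_diag 2)"
proof -
  have second: "rank_one_contraction3 2 2 2 (Psi_diag 2)
      (\<lambda>k. if k = 1 then 1 else 0) (\<lambda>i. if i = 1 then 1 else 0) (\<lambda>j. if j = 1 then 1 else 0)"
    unfolding rank_one_contraction3_def contract3_def Psi_diag_def by (simp add: sum_less_2)
  have "indep_pair 2 (\<lambda>i. if i = 0 then 1 else 0) (\<lambda>i. if i = 1 then 1 else 0)"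
    unfolding indep_pair_def
  proof (intro allI impI)
    fix \<alpha> \<beta> :: complex
    assume "\<forall>i<2. \<alpha> * (if i = 0 then 1 else 0) + \<beta> * (if i = (1::nat) then 1 else 0) = 0"
    from this[rule_format, of 0] this[rule_format, of 1] show "\<alpha> = 0 \<and> \<beta> = 0" by simp
  qed
  moreover have "nonzero_vec 2 (\<lambda>j. if j = 0 then 1 else 0)" "nonzero_vec 2 (\<lambda>j. if j = 1 then 1 else 0)"
    unfolding nonzero_vec_def by auto
  ultimately show ?thesis
    unfolding two_rank_one_in_span3_def using Psi_diag_first_slice[of 2] second by blast
qed

definition W_state :: tensor3 where
  "W_state = (\<lambda>i j k. if (i, j, k) \<in> {(0, 0, 1), (0, 1, 0), (1, 0, 0)} then 1 else 0)"

lemma W_state_space: "W_state \<in> tensor_space 2 2 2"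
  unfolding tensor_space_def W_state_def by auto

lemma W_state_concise: "concise 2 2 2 W_state"
  by (rule concise_by_echelon) (auto simp: W_state_def less_2_cases)

text \<open>Every rank-one matrix \<open>a b\<^sup>T\<close> in the span of the slices of the W state has \<open>a\<^sub>1 = 0\<close>, so
  no two of them have independent column vectors.\<close>

lemma W_state_rank_one_first_column:
  assumes "nonzero_vec 2 b" "rank_one_contraction3 2 2 2 W_state v a b"
  shows "a 1 = 0"
proof (rule ccontr)
  assume a1: "a 1 \<noteq> 0"
  have R: "a i * b j = (\<Sum>k<2. W_state i j k * v k)" if "i < 2" "j < 2" for i j
    using assms(2) that unfolding rank_one_contraction3_def contract3_def by simp
  have "a 1 * b 1 = 0" "a 0 * b 1 = v 0" "a 1 * b 0 = v 0"
    using R[of 1 1] R[of 0 1] R[of 1 0] by (simp_all add: sum_less_2 W_state_def)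
  then have "b 1 = 0" "b 0 = 0" using a1 by auto
  with assms(1) show False unfolding nonzero_vec_def by (auto simp: less_2_cases)
qed

lemma W_state_not_two_rank_one_in_span3: "\<not> two_rank_one_in_span3 2 2 2 W_state"
proof
  assume "two_rank_one_in_span3 2 2 2 W_state"
  then obtain v a b v' a' b' where b: "nonzero_vec 2 b" "nonzero_vec 2 b'" and indep: "indep_pair 2 a a'"
    and rk: "rank_one_contraction3 2 2 2 W_state v a b" "rank_one_contraction3 2 2 2 W_state v' a' b'"
    unfolding two_rank_one_in_span3_def by blast
  have "a 1 = 0" "a' 1 = 0"
    using W_state_rank_one_first_column[OF b(1) rk(1)] W_state_rank_one_first_column[OF b(2) rk(2)] .
  then have "\<forall>i<2. a' 0 * a i + (- a 0) * a' i = 0" by (auto simp: less_2_cases)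
  then have "a 0 = 0" using indep[unfolded indep_pair_def, rule_format, of "a' 0" "- a 0"] by simp
  then have "\<forall>i<2. 1 * a i + 0 * a' i = 0" using \<open>a 1 = 0\<close> by (auto simp: less_2_cases)
  then show False using indep[unfolded indep_pair_def, rule_format, of 1 0] by simp
qed

lemma incomparable_pair_large_d1:
  assumes "2 \<le> d3" "d3 \<le> d2" "d2 + d3 - 1 \<le> d1" "d1 < d2 * d3"
  shows "incomparable_maximal_pair d1 d2 d3"
proof (rule separated_concise_pair[where P = "annihilates_product d1 d2 d3"
      and \<Phi> = "Phi_poly d1 d2 d3" and \<Psi> = "Psi_spread d1 d2 d3"])
  show "Psi_spread d1 d2 d3 \<in> tensor_space d1 d2 d3" using assms by (intro Psi_spread_space) auto
  show "concise d1 d2 d3 (Phi_poly d1 d2 d3)" using assms by (rule Phi_poly_concise)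
  show "concise d1 d2 d3 (Psi_spread d1 d2 d3)" using assms by (intro Psi_spread_concise) auto
  show "annihilates_product d1 d2 d3 (Psi_spread d1 d2 d3)"
    using assms by (intro Psi_spread_annihilates_product) auto
  show "\<not> annihilates_product d1 d2 d3 (Phi_poly d1 d2 d3)"
    using assms(3) by (rule Phi_poly_not_annihilates_product)
qed (use assms in \<open>auto simp: Phi_poly_space annihilates_product_invariant\<close>)

lemma incomparable_pair_small_d1:
  assumes "3 \<le> d3" "d3 \<le> d2" "d2 \<le> d1" "d1 \<le> d2 + d3 - 2"
  shows "incomparable_maximal_pair d1 d2 d3"
proof (rule separated_concise_pair[where P = "rank_one_in_span1 d1 d2 d3"
      and \<Phi> = "Phi_hankel d1 d2 d3" and \<Psi> = "Psi_spread d1 d2 d3"])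
  have "d1 \<le> d2 * d3"
    using interior_grid_large[OF assms(1,2)] mult_le_mono[of "d2 - 1" d2 "d3 - 1" d3] assms(4) by linarith
  then show "concise d1 d2 d3 (Psi_spread d1 d2 d3)" using assms by (intro Psi_spread_concise) auto
  show "concise d1 d2 d3 (Phi_hankel d1 d2 d3)" using assms by (rule Phi_hankel_concise)
  show "\<not> rank_one_in_span1 d1 d2 d3 (Phi_hankel d1 d2 d3)"
    using assms by (intro Phi_hankel_not_rank_one_in_span1) auto
qed (use assms in \<open>auto simp: Phi_hankel_space Psi_spread_space Psi_spread_rank_one_in_span1
      rank_one_in_span1_invariant\<close>)

lemma incomparable_pair_pencil:
  assumes "3 \<le> d"
  shows "incomparable_maximal_pair d d 2"
  by (rule separated_concise_pair[where P = "rank_one_in_span3 d d 2"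
        and \<Phi> = "Phi_pencil d" and \<Psi> = "Psi_diag d"])
    (use assms in \<open>auto simp: Phi_pencil_space Psi_diag_space Phi_pencil_concise Psi_diag_concise
      rank_one_in_span3_invariant Psi_diag_rank_one_in_span3 Phi_pencil_not_rank_one_in_span3\<close>)

lemma incomparable_pair_qubits: "incomparable_maximal_pair 2 2 2"
  by (rule separated_concise_pair[where P = "two_rank_one_in_span3 2 2 2"
        and \<Phi> = W_state and \<Psi> = "Psi_diag 2"])
    (auto simp: W_state_space Psi_diag_space W_state_concise Psi_diag_concise
      two_rank_one_in_span3_invariant Psi_diag_two_rank_one_in_span3 W_state_not_two_rank_one_in_span3)

theorem mainTheorem5:
  fixes d1 d2 d3 :: nat
  assumes "d1 \<ge> d2" and "d2 \<ge> d3" and "d3 \<ge> 2"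
    and "int (d2 * d3) - int d1 > 1"
  shows "\<exists>\<Phi> \<Psi>. \<Phi> \<in> tensor_space d1 d2 d3 \<and> \<Psi> \<in> tensor_space d1 d2 d3 \<and>
           \<Phi> \<noteq> (\<lambda>_ _ _. 0) \<and> \<Psi> \<noteq> (\<lambda>_ _ _. 0) \<and>
           slocc_maximal d1 d2 d3 \<Phi> \<and> slocc_maximal d1 d2 d3 \<Psi> \<and>
           \<not> slocc_le d1 d2 d3 \<Phi> \<Psi> \<and> \<not> slocc_le d1 d2 d3 \<Psi> \<Phi>"
proof -
  have k: "d1 < d2 * d3" using assms(4) by linarith
  consider "d2 + d3 - 1 \<le> d1" | "d1 \<le> d2 + d3 - 2" "3 \<le> d3"
    | "d1 = d2" "d3 = 2" "3 \<le> d2" | "d1 = 2" "d2 = 2" "d3 = 2"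
    using assms(1-3) by linarith
  then have "incomparable_maximal_pair d1 d2 d3"
  proof cases
    case 1
    then show ?thesis using assms k by (intro incomparable_pair_large_d1) auto
  next
    case 2
    then show ?thesis using assms by (intro incomparable_pair_small_d1) auto
  qed (use incomparable_pair_pencil incomparable_pair_qubits in auto)
  then show ?thesis unfolding incomparable_maximal_pair_def .
qed

end
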